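(* Let $G$ be a connected graph on $n$ vertices and $(T,w)$ its weighted block tree. Then exactly one of the following holds: 1. $T$ has exactly one centroid $c$, and $\mathrm{hs}(c)<n/2$. 2. $T$ has exactly two centroids $v$ and $B$, where $v$ is a cut vertex of $G$ and $B$ is a block of $G$ containing $v$; removing the edge $vB$ partitions $T$ into two subtrees $T_1\ni v$, $T_2\ni B$ of weight $n/2$ each, and every subtree of $T_1$ not containing $v$ (resp. of $T_2$ not containing $B$) has weight at most $n/2-1$. 3. $T$ contains a zero-weight block vertex $B$ which is the unique central centroid of $T$ (and $T$ has exactly three centroids), whose removal partitions $T$ into two subtrees of weight $n/2$ each; consequently the block $B$ is isomorphic to $K_2$.
   Context: A block of a graph is a maximal connected subgraph without a cut vertex. The block tree of a connected graph $G$ has as vertices the cut vertices of $G$ and the blocks of $G$, with a cut vertex $v$ adjacent to a block $B$ iff $v\in V(B)$. The weighted block tree assigns weight $1$ to each cut vertex and, to each block $B$, the number of vertices of $B$ that are not cut vertices of $G$. For a weighted tree $(T,w)$ and vertex $x$, the subtrees of $x$ are the components of $T-x$, their weight is the sum of weights of their vertices, and $\mathrm{hs}(x)$ is the maximum weight of a subtree of $x$ ($0$ if $T$ has one vertex). A centroid is a vertex minimizing $\mathrm{hs}$; the centroids form the vertex set of a path, and a centroid is central if it is a center (middle vertex) of that path. *)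

theory Defs
  imports Complex_Main
begin

type_synonym 'a sgraph = "'a set \<times> 'a set set"

definition verts :: "'a sgraph \<Rightarrow> 'a set" where "verts G = fst G"
definition edges :: "'a sgraph \<Rightarrow> 'a set set" where "edges G = snd G"

definition wf_graph :: "'a sgraph \<Rightarrow> bool" where
  "wf_graph G \<longleftrightarrow> finite (verts G) \<and>
     (\<forall>e\<in>edges G. \<exists>x y. x \<noteq> y \<and> e = {x, y} \<and> x \<in> verts G \<and> y \<in> verts G)"

definition walk :: "'a sgraph \<Rightarrow> 'a list \<Rightarrow> bool" where
  "walk G xs \<longleftrightarrow> xs \<noteq> [] \<and> set xs \<subseteq> verts G \<and>
     (\<forall>i. Suc i < length xs \<longrightarrow> {xs ! i, xs ! Suc i} \<in> edges G)"

definition reachable :: "'a sgraph \<Rightarrow> 'a \<Rightarrow> 'a \<Rightarrow> bool" where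
  "reachable G x y \<longleftrightarrow> (\<exists>xs. walk G xs \<and> hd xs = x \<and> last xs = y)"

definition connected_graph :: "'a sgraph \<Rightarrow> bool" where
  "connected_graph G \<longleftrightarrow> verts G \<noteq> {} \<and> (\<forall>x\<in>verts G. \<forall>y\<in>verts G. reachable G x y)"

definition components :: "'a sgraph \<Rightarrow> 'a set set" where
  "components G = (\<lambda>x. {y \<in> verts G. reachable G x y}) ` verts G"

definition delete_vertex :: "'a sgraph \<Rightarrow> 'a \<Rightarrow> 'a sgraph" where
  "delete_vertex G v = (verts G - {v}, {e \<in> edges G. v \<notin> e})"

definition induced :: "'a sgraph \<Rightarrow> 'a set \<Rightarrow> 'a sgraph" where
  "induced G S = (S, {e \<in> edges G. e \<subseteq> S})"

definition subgraph :: "'a sgraph \<Rightarrow> 'a sgraph \<Rightarrow> bool" where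
  "subgraph H G \<longleftrightarrow> verts H \<subseteq> verts G \<and> edges H \<subseteq> edges G \<and>
     (\<forall>e\<in>edges H. e \<subseteq> verts H)"

definition cut_vertex :: "'a sgraph \<Rightarrow> 'a \<Rightarrow> bool" where
  "cut_vertex G v \<longleftrightarrow> v \<in> verts G \<and>
     card (components (delete_vertex G v)) > card (components G)"

definition biconn_piece :: "'a sgraph \<Rightarrow> 'a sgraph \<Rightarrow> bool" where
  "biconn_piece G H \<longleftrightarrow> subgraph H G \<and> connected_graph H \<and> (\<forall>v. \<not> cut_vertex H v)"

definition is_block :: "'a sgraph \<Rightarrow> 'a sgraph \<Rightarrow> bool" where
  "is_block G B \<longleftrightarrow> biconn_piece G B \<and>
     (\<forall>H. biconn_piece G H \<and> subgraph B H \<longrightarrow> H = B)"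

type_synonym 'a btvert = "'a + 'a sgraph"

definition block_tree :: "'a sgraph \<Rightarrow> 'a btvert sgraph" where
  "block_tree G =
     (Inl ` {v. cut_vertex G v} \<union> Inr ` {B. is_block G B},
      {{Inl v, Inr B} | v B. cut_vertex G v \<and> is_block G B \<and> v \<in> verts B})"

definition bt_weight :: "'a sgraph \<Rightarrow> 'a btvert \<Rightarrow> nat" where
  "bt_weight G x = (case x of Inl v \<Rightarrow> 1
                   | Inr B \<Rightarrow> card {u \<in> verts B. \<not> cut_vertex G u})"

definition set_weight :: "('b \<Rightarrow> nat) \<Rightarrow> 'b set \<Rightarrow> nat" where
  "set_weight w S = (\<Sum>x\<in>S. w x)"

definition subtrees_of :: "'b sgraph \<Rightarrow> 'b \<Rightarrow> 'b set set" where
  "subtrees_of T x = components (delete_vertex T x)"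

definition hs :: "'b sgraph \<Rightarrow> ('b \<Rightarrow> nat) \<Rightarrow> 'b \<Rightarrow> nat" where
  "hs T w x = Max (insert 0 (set_weight w ` subtrees_of T x))"

definition centroid :: "'b sgraph \<Rightarrow> ('b \<Rightarrow> nat) \<Rightarrow> 'b \<Rightarrow> bool" where
  "centroid T w x \<longleftrightarrow> x \<in> verts T \<and> (\<forall>y\<in>verts T. hs T w x \<le> hs T w y)"

definition centroids :: "'b sgraph \<Rightarrow> ('b \<Rightarrow> nat) \<Rightarrow> 'b set" where
  "centroids T w = {x. centroid T w x}"

definition gdist :: "'b sgraph \<Rightarrow> 'b \<Rightarrow> 'b \<Rightarrow> nat" where
  "gdist G x y = (LEAST n. \<exists>xs. walk G xs \<and> hd xs = x \<and> last xs = y \<and> length xs = Suc n)"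

definition ecc :: "'b sgraph \<Rightarrow> 'b \<Rightarrow> nat" where
  "ecc G x = Max (gdist G x ` verts G)"

text \<open>A centroid is central if it is a center (vertex of minimum eccentricity)
  of the path formed by the centroids (the subgraph of T induced by them).\<close>
definition central_centroid :: "'b sgraph \<Rightarrow> ('b \<Rightarrow> nat) \<Rightarrow> 'b \<Rightarrow> bool" where
  "central_centroid T w c \<longleftrightarrow> centroid T w c \<and>
     (\<forall>c'\<in>centroids T w. ecc (induced T (centroids T w)) c
                          \<le> ecc (induced T (centroids T w)) c')"

definition side_of_edge :: "'b sgraph \<Rightarrow> 'b set \<Rightarrow> 'b \<Rightarrow> 'b set" where
  "side_of_edge T e x = {y \<in> verts T. reachable (verts T, edges T - {e}) x y}"

definition subtree_set :: "'b sgraph \<Rightarrow> 'b set \<Rightarrow> bool" where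
  "subtree_set T S \<longleftrightarrow> S \<subseteq> verts T \<and> connected_graph (induced T S)"

end

theory Submission
  imports Defs
begin

text \<open>The block tree \<open>T\<close> is a tree of total weight \<open>n\<close> in which every edge has an endpoint of
  positive weight, namely its cut vertex. In such a tree the subtrees of a vertex \<open>x\<close> are the
  branches behind its neighbours, and the two branches of an edge split the weight \<open>n\<close>.
  Let \<open>c\<close> be a centroid. If \<open>hs(c) < n/2\<close>, every other vertex has a subtree of weight more than
  \<open>n/2\<close> and \<open>c\<close> is the only centroid. Otherwise the heaviest branch of \<open>c\<close>, behind a
  neighbour \<open>y\<close>, has weight exactly \<open>n/2\<close> and \<open>y\<close> is a centroid too. A third centroid must
  then sit next to \<open>c\<close> or \<open>y\<close>, which forces that vertex to have weight zero and exactly two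
  branches of weight \<open>n/2\<close>; it is the middle of the three centroids. Since the vertices of a
  weight-zero block are cut vertices with pairwise distinct branches, such a block is a \<open>K\<^sub>2\<close>.\<close>

section \<open>Walks and reachability\<close>

lemma verts_pair[simp]: "verts (V, E) = V" by (simp add: verts_def)
lemma edges_pair[simp]: "edges (V, E) = E" by (simp add: edges_def)

lemma verts_delete_vertex[simp]: "verts (delete_vertex G v) = verts G - {v}"
  by (simp add: delete_vertex_def)
lemma edges_delete_vertex[simp]: "edges (delete_vertex G v) = {e \<in> edges G. v \<notin> e}"
  by (simp add: delete_vertex_def)
lemma verts_induced[simp]: "verts (induced G S) = S" by (simp add: induced_def)
lemma edges_induced[simp]: "edges (induced G S) = {e \<in> edges G. e \<subseteq> S}" by (simp add: induced_def)

lemma walk_Nil[simp]: "\<not> walk G []" by (simp add: walk_def)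
lemma walk_single[simp]: "walk G [x] \<longleftrightarrow> x \<in> verts G" by (simp add: walk_def)
lemma walk_Cons_Cons[simp]: "walk G (x # y # xs) \<longleftrightarrow> x \<in> verts G \<and> {x, y} \<in> edges G \<and> walk G (y # xs)"
proof
  assume w: "walk G (x # y # xs)"
  have "Suc 0 < length (x # y # xs)" by simp
  then have "{(x # y # xs) ! 0, (x # y # xs) ! Suc 0} \<in> edges G" using w unfolding walk_def by blast
  then have "{x,y} \<in> edges G" by simp
  moreover have "walk G (y # xs)" unfolding walk_def
  proof (intro conjI allI impI)
    show "set (y # xs) \<subseteq> verts G" using w by (simp add: walk_def)
  next
    fix i assume "Suc i < length (y # xs)"
    then have "Suc (Suc i) < length (x # y # xs)" by simp
    then have "{(x # y # xs) ! Suc i, (x # y # xs) ! Suc (Suc i)} \<in> edges G" using w unfolding walk_def by blast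
    then show "{(y # xs) ! i, (y # xs) ! Suc i} \<in> edges G" by simp
  qed simp
  ultimately show "x \<in> verts G \<and> {x, y} \<in> edges G \<and> walk G (y # xs)" using w by (simp add: walk_def)
next
  assume h: "x \<in> verts G \<and> {x, y} \<in> edges G \<and> walk G (y # xs)"
  show "walk G (x # y # xs)" unfolding walk_def
  proof (intro conjI allI impI)
    show "set (x # y # xs) \<subseteq> verts G" using h by (simp add: walk_def)
  next
    fix i assume "Suc i < length (x # y # xs)"
    then show "{(x # y # xs) ! i, (x # y # xs) ! Suc i} \<in> edges G"
      using h by (cases i) (auto simp: walk_def)
  qed simp
qed

lemma walk_Cons_iff: "walk G (x # xs) \<longleftrightarrow> x \<in> verts G \<and> (xs = [] \<or> ({x, hd xs} \<in> edges G \<and> walk G xs))"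
  by (cases xs) auto

definition adj :: "'a sgraph \<Rightarrow> ('a \<times> 'a) set" where
  "adj G = {(x,y). x \<in> verts G \<and> y \<in> verts G \<and> {x,y} \<in> edges G}"

lemma reachable_iff_rtrancl: "reachable G x y \<longleftrightarrow> x \<in> verts G \<and> (x,y) \<in> (adj G)\<^sup>*"
proof
  assume "reachable G x y"
  then obtain xs where w: "walk G xs" "hd xs = x" "last xs = y" unfolding reachable_def by blast
  have "x \<in> verts G \<and> (x, last xs) \<in> (adj G)\<^sup>*" if "walk G xs" "hd xs = x" for xs x
    using that
  proof (induction xs arbitrary: x)
    case Nil then show ?case by simp
  next
    case (Cons a xs)
    show ?case
    proof (cases xs)
      case Nil then show ?thesis using Cons by auto
    next
      case (Cons b ys)
      have "b \<in> verts G" using Cons.prems Cons by (auto simp: walk_Cons_iff)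
      then have "(a, b) \<in> adj G" using Cons.prems Cons by (auto simp: adj_def)
      moreover have "(b, last xs) \<in> (adj G)\<^sup>*" using Cons.IH[of b] Cons.prems Cons by auto
      ultimately show ?thesis using Cons.prems Cons by auto
    qed
  qed
  then show "x \<in> verts G \<and> (x, y) \<in> (adj G)\<^sup>*" using w by auto
next
  assume "x \<in> verts G \<and> (x, y) \<in> (adj G)\<^sup>*"
  then have "(x,y) \<in> (adj G)\<^sup>*" "x \<in> verts G" by auto
  then show "reachable G x y"
  proof (induction rule: converse_rtrancl_induct)
    case base then show ?case unfolding reachable_def by (intro exI[of _ "[y]"]) auto
  next
    case (step a b)
    then have "b \<in> verts G" "{a,b} \<in> edges G" by (auto simp: adj_def)
    with step obtain xs where "walk G xs" "hd xs = b" "last xs = y" unfolding reachable_def by blast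
    then show ?case unfolding reachable_def using \<open>{a,b} \<in> edges G\<close> step.prems
      by (intro exI[of _ "a # xs"]) (cases xs, auto)
  qed
qed

lemma reachable_refl: "x \<in> verts G \<Longrightarrow> reachable G x x" by (simp add: reachable_iff_rtrancl)
lemma reachable_in: "reachable G x y \<Longrightarrow> x \<in> verts G \<and> y \<in> verts G"
proof -
  assume "reachable G x y"
  then obtain xs where "walk G xs" "hd xs = x" "last xs = y" unfolding reachable_def by blast
  then show ?thesis unfolding walk_def by (auto intro: hd_in_set last_in_set)
qed
lemma reachable_trans: "reachable G x y \<Longrightarrow> reachable G y z \<Longrightarrow> reachable G x z"
  by (auto simp: reachable_iff_rtrancl)
lemma adj_sym: "(x,y) \<in> adj G \<Longrightarrow> (y,x) \<in> adj G" unfolding adj_def by (simp add: insert_commute)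
lemma reachable_sym: "reachable G x y \<Longrightarrow> reachable G y x"
proof -
  assume r: "reachable G x y"
  then have "(x,y) \<in> (adj G)\<^sup>*" by (simp add: reachable_iff_rtrancl)
  then have "(y,x) \<in> (adj G)\<^sup>*"
    by (induction rule: rtrancl_induct) (auto intro: converse_rtrancl_into_rtrancl adj_sym)
  then show ?thesis using reachable_in[OF r] by (simp add: reachable_iff_rtrancl)
qed
lemma reachable_edge: "{x,y} \<in> edges G \<Longrightarrow> x \<in> verts G \<Longrightarrow> y \<in> verts G \<Longrightarrow> reachable G x y"
  by (auto simp: reachable_iff_rtrancl adj_def)

lemma reachable_mono: "reachable G x y \<Longrightarrow> verts G \<subseteq> verts H \<Longrightarrow> edges G \<subseteq> edges H \<Longrightarrow> reachable H x y"
proof -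
  assume r: "reachable G x y" and s: "verts G \<subseteq> verts H" "edges G \<subseteq> edges H"
  have "adj G \<subseteq> adj H" using s by (auto simp: adj_def)
  then show ?thesis using r s by (auto simp: reachable_iff_rtrancl dest: rtrancl_mono[THEN subsetD])
qed

lemma reachable_induct[consumes 1, case_names base step]:
  assumes "reachable G x y" "P x"
    "\<And>a b. reachable G x a \<Longrightarrow> P a \<Longrightarrow> {a,b} \<in> edges G \<Longrightarrow> a \<in> verts G \<Longrightarrow> b \<in> verts G \<Longrightarrow> P b"
  shows "P y"
proof -
  have "(x,y) \<in> (adj G)\<^sup>*" "x \<in> verts G" using assms(1) by (auto simp: reachable_iff_rtrancl)
  then show ?thesis
  proof (induction rule: rtrancl_induct)
    case base then show ?case using assms(2) by simp
  next
    case (step a b)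
    then show ?case using assms(3)[of a b] by (auto simp: adj_def reachable_iff_rtrancl)
  qed
qed

lemma card_components_le_1_iff:
  assumes "finite (verts G)"
  shows "card (components G) \<le> 1 \<longleftrightarrow> (\<forall>a\<in>verts G. \<forall>b\<in>verts G. reachable G a b)"
proof
  assume c: "card (components G) \<le> 1"
  show "\<forall>a\<in>verts G. \<forall>b\<in>verts G. reachable G a b"
  proof (intro ballI, rule ccontr)
    fix a b assume ab: "a \<in> verts G" "b \<in> verts G" "\<not> reachable G a b"
    let ?c = "\<lambda>x. {y \<in> verts G. reachable G x y}"
    have "?c a \<noteq> ?c b" using ab reachable_refl[of b G] by auto
    moreover have "?c a \<in> components G" "?c b \<in> components G" using ab by (auto simp: components_def)
    moreover have "finite (components G)" using assms by (simp add: components_def)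
    ultimately have "card {?c a, ?c b} \<le> card (components G)" by (intro card_mono) auto
    then show False using c \<open>?c a \<noteq> ?c b\<close> by simp
  qed
next
  assume "\<forall>a\<in>verts G. \<forall>b\<in>verts G. reachable G a b"
  then have "components G \<subseteq> {verts G}" by (auto simp: components_def dest: reachable_in)
  then have "card (components G) \<le> card {verts G}" by (intro card_mono) auto
  then show "card (components G) \<le> 1" by simp
qed

lemma card_components_connected: "connected_graph G \<Longrightarrow> card (components G) = 1"
proof -
  assume c: "connected_graph G"
  then have "components G = {verts G}" unfolding components_def connected_graph_def
    by (auto dest: reachable_in)
  then show ?thesis by simp
qed

lemma cut_vertex_iff:
  assumes "finite (verts G)" "connected_graph G"
  shows "cut_vertex G v \<longleftrightarrow> v \<in> verts G \<and> (\<exists>a\<in>verts G - {v}. \<exists>b\<in>verts G - {v}. \<not> reachable (delete_vertex G v) a b)"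
  using card_components_le_1_iff[of "delete_vertex G v"] assms card_components_connected[OF assms(2)]
  unfolding cut_vertex_def by auto

fun path_edges :: "'a list \<Rightarrow> 'a set set" where
  "path_edges (x # y # xs) = insert {x,y} (path_edges (y # xs))"
| "path_edges _ = {}"

lemma walk_iff_path_edges: "walk G xs \<longleftrightarrow> xs \<noteq> [] \<and> set xs \<subseteq> verts G \<and> path_edges xs \<subseteq> edges G"
proof (induction xs rule: path_edges.induct)
  case (1 x y xs) then show ?case by auto
next
  case "2_1" then show ?case by simp
next
  case ("2_2" v) then show ?case by simp
qed

lemma path_edges_subset: "e \<in> path_edges xs \<Longrightarrow> e \<subseteq> set xs"
  by (induction xs rule: path_edges.induct) auto

lemma path_edges_append: "path_edges (xs @ y # ys) = path_edges (xs @ [y]) \<union> path_edges (y # ys)"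
  by (induction xs rule: path_edges.induct) auto

lemma path_edges_snoc: "xs \<noteq> [] \<Longrightarrow> path_edges (xs @ [y]) = insert {last xs, y} (path_edges xs)"
  by (induction xs rule: path_edges.induct) auto

lemma path_edges_append2: "xs \<noteq> [] \<Longrightarrow> ys \<noteq> [] \<Longrightarrow> path_edges (xs @ ys) = path_edges xs \<union> insert {last xs, hd ys} (path_edges ys)"
  using path_edges_append[of xs "hd ys" "tl ys"] path_edges_snoc[of xs "hd ys"] by (cases ys) auto

definition path_graph :: "'a list \<Rightarrow> 'a sgraph" where "path_graph xs = (set xs, path_edges xs)"

lemma reachable_path_graph: "xs \<noteq> [] \<Longrightarrow> u \<in> set xs \<Longrightarrow> reachable (path_graph xs) (hd xs) u"
proof (induction xs rule: path_edges.induct)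
  case (1 x y xs)
  show ?case
  proof (cases "u = x")
    case True then show ?thesis by (auto simp: path_graph_def intro: reachable_refl)
  next
    case False
    then have "reachable (path_graph (y # xs)) y u" using 1 by auto
    then have "reachable (path_graph (x # y # xs)) y u"
      by (rule reachable_mono) (auto simp: path_graph_def)
    moreover have "reachable (path_graph (x # y # xs)) x y"
      by (rule reachable_edge) (auto simp: path_graph_def)
    ultimately show ?thesis by (auto intro: reachable_trans)
  qed
qed (auto simp: path_graph_def intro: reachable_refl)

lemma walk_prefix: "walk G (xs @ ys) \<Longrightarrow> xs \<noteq> [] \<Longrightarrow> walk G xs"
  using path_edges_append[of xs "hd ys" "tl ys"] path_edges_snoc[of xs "hd ys"]
  by (cases ys) (auto simp: walk_iff_path_edges)

lemma walk_suffix: "walk G (xs @ ys) \<Longrightarrow> ys \<noteq> [] \<Longrightarrow> walk G ys"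
  using path_edges_append2[of xs ys] by (cases "xs = []") (auto simp: walk_iff_path_edges)

lemma walk_append: "walk G xs \<Longrightarrow> walk G ys \<Longrightarrow> {last xs, hd ys} \<in> edges G \<Longrightarrow> walk G (xs @ ys)"
  using path_edges_append2[of xs ys] by (auto simp: walk_iff_path_edges)

lemma reachable_distinct_walk:
  assumes "reachable G a b"
  shows "\<exists>xs. walk G xs \<and> distinct xs \<and> hd xs = a \<and> last xs = b"
proof -
  have "(a,b) \<in> (adj G)\<^sup>*" "a \<in> verts G" using assms by (auto simp: reachable_iff_rtrancl)
  then show ?thesis
  proof (induction rule: converse_rtrancl_induct)
    case base then show ?case by (intro exI[of _ "[b]"]) auto
  next
    case (step x x')
    then have e: "{x,x'} \<in> edges G" "x' \<in> verts G" "x \<in> verts G" by (auto simp: adj_def)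
    then obtain xs where xs: "walk G xs" "distinct xs" "hd xs = x'" "last xs = b" using step by auto
    show ?case
    proof (cases "x \<in> set xs")
      case True
      then obtain ys zs where yz: "xs = ys @ x # zs" by (meson split_list)
      then have "walk G (x # zs)" using xs walk_suffix by blast
      moreover have "distinct (x # zs)" using xs yz by auto
      moreover have "last (x # zs) = b" using xs yz by (cases zs) auto
      ultimately show ?thesis by (intro exI[of _ "x # zs"]) auto
    next
      case False
      have "xs \<noteq> []" using xs by auto
      then have "walk G (x # xs)" using xs e by (cases xs) auto
      then show ?thesis using False xs \<open>xs \<noteq> []\<close> by (intro exI[of _ "x # xs"]) auto
    qed
  qed
qed

lemma walk_reachable: "walk G xs \<Longrightarrow> reachable G (hd xs) (last xs)"
  unfolding reachable_def by blast

lemma path_edges_Cons_mono: "path_edges xs \<subseteq> path_edges (x # xs)"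
  by (cases xs) auto

lemma path_edges_append_left: "path_edges xs \<subseteq> path_edges (xs @ ys)"
  by (induction xs rule: path_edges.induct) auto

lemma path_edges_append_right: "path_edges ys \<subseteq> path_edges (xs @ ys)"
  by (induction xs) (auto dest: subsetD[OF path_edges_Cons_mono])

lemma walk_prefix_before_entry:
  assumes xs: "walk G xs" and A: "hd xs \<notin> A" "x \<in> set xs" "x \<in> A"
  obtains ys c zs where "xs = ys @ c # zs" "ys \<noteq> []" "c \<in> A" "set ys \<inter> A = {}"
    "walk G ys" "{last ys, c} \<in> edges G"
proof -
  obtain ys c zs where yz: "xs = ys @ c # zs" "c \<in> A" "\<forall>y\<in>set ys. y \<notin> A"
    using split_list_first_prop[of xs "\<lambda>y. y \<in> A"] A(2,3) by blast
  have ne: "ys \<noteq> []" using yz(1,2) A(1) by (cases ys) auto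
  have "walk G ((ys @ [c]) @ zs)" using xs yz(1) by simp
  then have "walk G (ys @ [c])" by (rule walk_prefix) simp
  then have "walk G ys" "{last ys, c} \<in> edges G"
    using walk_prefix[OF _ ne] path_edges_snoc[OF ne, of c] by (auto simp: walk_iff_path_edges)
  then show ?thesis using that yz ne by blast
qed

lemma reachable_first_edge:
  assumes "reachable G x y" "x \<noteq> y"
  obtains u where "{x,u} \<in> edges G"
proof -
  have "(x, y) \<in> (adj G)\<^sup>*" using assms(1) by (simp add: reachable_iff_rtrancl)
  then obtain u where "(x,u) \<in> adj G" using assms(2) by (metis converse_rtranclE)
  then show ?thesis using that by (auto simp: adj_def)
qed

lemma gdist_self: "x \<in> verts G \<Longrightarrow> gdist G x x = 0"
  unfolding gdist_def by (rule Least_eq_0) (rule exI[of _ "[x]"], simp)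

lemma hd_eq_last_if_length_1: "length xs = Suc 0 \<Longrightarrow> hd xs = last xs"
  by (cases xs) auto

lemma gdist_edge:
  assumes "{x,y} \<in> edges G" "x \<in> verts G" "y \<in> verts G" "x \<noteq> y"
  shows "gdist G x y = 1"
  unfolding gdist_def
proof (rule Least_equality)
  show "\<exists>xs. walk G xs \<and> hd xs = x \<and> last xs = y \<and> length xs = Suc 1"
    using assms by (intro exI[of _ "[x,y]"]) simp
  fix k assume "\<exists>xs. walk G xs \<and> hd xs = x \<and> last xs = y \<and> length xs = Suc k"
  then obtain xs where xs: "walk G xs" "hd xs = x" "last xs = y" "length xs = Suc k" by blast
  show "1 \<le> k"
  proof (rule ccontr)
    assume "\<not> 1 \<le> k"
    then have "k = 0" by simp
    then have "hd xs = last xs" using xs(4) hd_eq_last_if_length_1 by simp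
    then show False using xs assms(4) by simp
  qed
qed

lemma gdist_two:
  assumes "walk G [x,u,y]" "x \<noteq> y" "{x,y} \<notin> edges G"
  shows "gdist G x y = 2"
  unfolding gdist_def
proof (rule Least_equality)
  show "\<exists>xs. walk G xs \<and> hd xs = x \<and> last xs = y \<and> length xs = Suc 2"
    using assms by (intro exI[of _ "[x,u,y]"]) simp
  fix k assume "\<exists>xs. walk G xs \<and> hd xs = x \<and> last xs = y \<and> length xs = Suc k"
  then obtain xs where xs: "walk G xs" "hd xs = x" "last xs = y" "length xs = Suc k" by blast
  show "2 \<le> k"
  proof (rule ccontr)
    assume "\<not> 2 \<le> k"
    then have "k = 0 \<or> k = 1" by auto
    then show False
    proof
      assume "k = 0"
      then have "hd xs = last xs" using xs(4) hd_eq_last_if_length_1 by simp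
      then show False using xs assms(2) by simp
    next
      assume "k = 1"
      then obtain p q where "xs = [p,q]" using xs(4) by (auto simp: length_Suc_conv)
      then show False using xs assms(3) by simp
    qed
  qed
qed

lemma ecc_path_of_three:
  assumes V: "verts I = {a,y,b}" and e: "{y,a} \<in> edges I" "{y,b} \<in> edges I"
    and ne: "{a,b} \<notin> edges I" and d: "y \<noteq> a" "y \<noteq> b" "a \<noteq> b"
  shows "ecc I y = 1" "ecc I a = 2" "ecc I b = 2"
proof -
  have e': "{a,y} \<in> edges I" "{b,y} \<in> edges I" "{b,a} \<notin> edges I"
    using e ne by (simp_all add: insert_commute)
  have in_I: "a \<in> verts I" "y \<in> verts I" "b \<in> verts I" using V by auto
  have g1: "gdist I y a = 1" "gdist I y b = 1" "gdist I a y = 1" "gdist I b y = 1"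
    using gdist_edge[OF e(1)] gdist_edge[OF e(2)] gdist_edge[OF e'(1)] gdist_edge[OF e'(2)] in_I d
    by auto
  have g0: "gdist I a a = 0" "gdist I b b = 0" "gdist I y y = 0"
    using gdist_self[OF in_I(1)] gdist_self[OF in_I(3)] gdist_self[OF in_I(2)] by simp_all
  have w: "walk I [a,y,b]" "walk I [b,y,a]" using e e' in_I by simp_all
  have g2: "gdist I a b = 2" "gdist I b a = 2"
    by (rule gdist_two[OF w(1) d(3) ne], rule gdist_two[OF w(2) d(3)[symmetric] e'(3)])
  show "ecc I y = 1" "ecc I a = 2" "ecc I b = 2" unfolding ecc_def V using g0 g1 g2 by simp_all
qed

section \<open>Nonseparable graphs and blocks\<close>

definition nonseparable :: "'a sgraph \<Rightarrow> bool" where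
  "nonseparable H \<longleftrightarrow> (\<forall>v\<in>verts H. \<forall>a\<in>verts H - {v}. \<forall>b\<in>verts H - {v}. reachable (delete_vertex H v) a b)"

lemma finite_subgraph_verts: "subgraph H G \<Longrightarrow> finite (verts G) \<Longrightarrow> finite (verts H)"
  unfolding subgraph_def by (auto intro: finite_subset)

lemma biconn_piece_iff:
  assumes "finite (verts G)"
  shows "biconn_piece G H \<longleftrightarrow> subgraph H G \<and> connected_graph H \<and> nonseparable H"
proof -
  have "(\<forall>v. \<not> cut_vertex H v) \<longleftrightarrow> nonseparable H" if "subgraph H G" "connected_graph H"
    using cut_vertex_iff[OF finite_subgraph_verts[OF that(1) assms] that(2)] unfolding nonseparable_def by blast
  then show ?thesis unfolding biconn_piece_def by blast
qed

lemma walk_mono: "walk H xs \<Longrightarrow> verts H \<subseteq> verts G \<Longrightarrow> edges H \<subseteq> edges G \<Longrightarrow> walk G xs"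
  by (auto simp: walk_iff_path_edges)

lemma nonseparable_reachable_delete:
  assumes "subgraph H G" "connected_graph H" "nonseparable H" "a \<in> verts H - {v}" "b \<in> verts H - {v}"
  shows "reachable (delete_vertex H v) a b"
proof (cases "v \<in> verts H")
  case True then show ?thesis using assms unfolding nonseparable_def by blast
next
  case False
  have "reachable H a b" using assms unfolding connected_graph_def by blast
  then show ?thesis
    by (rule reachable_mono) (use False assms(1) in \<open>auto simp: subgraph_def\<close>)
qed

lemma reachable_delete_vertex_mono:
  "reachable (delete_vertex H v) a b \<Longrightarrow> verts H \<subseteq> verts U \<Longrightarrow> edges H \<subseteq> edges U
    \<Longrightarrow> reachable (delete_vertex U v) a b"
  by (erule reachable_mono) auto

lemma connected_graphI:
  assumes "r \<in> verts H" "\<And>u. u \<in> verts H \<Longrightarrow> reachable H u r"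
  shows "connected_graph H"
  unfolding connected_graph_def using assms by (auto intro: reachable_trans reachable_sym)

lemma nonseparableI:
  assumes "\<And>v. v \<in> verts H \<Longrightarrow> \<exists>r\<in>verts H - {v}. \<forall>u\<in>verts H - {v}. reachable (delete_vertex H v) u r"
  shows "nonseparable H"
  unfolding nonseparable_def
proof (intro ballI)
  fix v a b assume v: "v \<in> verts H" and ab: "a \<in> verts H - {v}" "b \<in> verts H - {v}"
  obtain r where r: "r \<in> verts H - {v}" "\<forall>u\<in>verts H - {v}. reachable (delete_vertex H v) u r"
    using assms[OF v] by blast
  then show "reachable (delete_vertex H v) a b" using ab by (meson reachable_sym reachable_trans)
qed

lemma reachable_in_path_graph_delete:
  assumes "ys \<noteq> []" "set ys \<subseteq> set xs" "path_edges ys \<subseteq> path_edges xs" "v \<notin> set ys" "u \<in> set ys"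
  shows "reachable (delete_vertex (path_graph xs) v) (hd ys) u"
proof -
  have avoid: "\<forall>e\<in>path_edges ys. v \<notin> e" using assms(4) path_edges_subset by blast
  have "reachable (path_graph ys) (hd ys) u" using assms by (intro reachable_path_graph)
  then show ?thesis by (rule reachable_mono) (use assms avoid in \<open>auto simp: path_graph_def\<close>)
qed

lemma path_graph_delete_reaches_end:
  assumes "distinct xs" "u \<in> set xs" "u \<noteq> v"
  shows "\<exists>r\<in>{hd xs, last xs}. r \<noteq> v \<and> reachable (delete_vertex (path_graph xs) v) u r"
proof (cases "v \<in> set xs")
  case False
  have "reachable (delete_vertex (path_graph xs) v) (hd xs) u"
    by (rule reachable_in_path_graph_delete) (use assms False in auto)
  moreover have "hd xs \<noteq> v" using False assms(2) by (metis empty_iff hd_in_set list.set(1))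
  ultimately show ?thesis by (auto intro: reachable_sym)
next
  case True
  then obtain ys zs where xs: "xs = ys @ v # zs" by (meson split_list)
  have v: "v \<notin> set ys" "v \<notin> set zs" using assms(1) xs by auto
  have "u \<in> set ys \<or> u \<in> set zs" using assms(2,3) xs by auto
  then show ?thesis
  proof
    assume u: "u \<in> set ys"
    have "reachable (delete_vertex (path_graph xs) v) (hd ys) u"
      by (rule reachable_in_path_graph_delete) (use u v xs path_edges_append_left in auto)
    moreover have "hd ys = hd xs" "hd ys \<noteq> v" using u v xs by (cases ys; auto)+
    ultimately show ?thesis by (auto intro: reachable_sym)
  next
    assume u: "u \<in> set zs"
    then have zs: "zs \<noteq> []" by auto
    have pe: "path_edges zs \<subseteq> path_edges xs"
      using path_edges_append_right[of zs "ys @ [v]"] xs by simp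
    have "reachable (delete_vertex (path_graph xs) v) (hd zs) u"
      "reachable (delete_vertex (path_graph xs) v) (hd zs) (last zs)"
      by (rule reachable_in_path_graph_delete; use u v xs pe last_in_set[OF zs] in auto)+
    moreover have "last zs = last xs" "last zs \<noteq> v" using v xs last_in_set[OF zs] by auto
    ultimately show ?thesis by (auto intro: reachable_sym reachable_trans)
  qed
qed

lemma connected_add_path:
  assumes H: "connected_graph H" and xs: "xs \<noteq> []" "hd xs \<in> verts H"
  shows "connected_graph (verts H \<union> set xs, edges H \<union> path_edges xs)" (is "connected_graph ?K")
proof (rule connected_graphI)
  show "hd xs \<in> verts ?K" using xs by simp
  fix u assume u: "u \<in> verts ?K"
  have from_H: "reachable ?K a b" if "reachable H a b" for a b
    using that by (rule reachable_mono) auto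
  have from_xs: "reachable ?K a b" if "reachable (path_graph xs) a b" for a b
    using that by (rule reachable_mono) (auto simp: path_graph_def)
  have "reachable H (hd xs) u \<or> reachable (path_graph xs) (hd xs) u"
    using u H xs reachable_path_graph[OF xs(1)] unfolding connected_graph_def by auto
  then have "reachable ?K (hd xs) u" using from_H from_xs by blast
  then show "reachable ?K u (hd xs)" by (rule reachable_sym)
qed

lemma biconn_piece_add_path:
  assumes fin: "finite (verts G)" and bp: "biconn_piece G H" and xs: "walk G xs" "distinct xs"
    and ends: "hd xs \<in> verts H" "last xs \<in> verts H" "hd xs \<noteq> last xs"
  shows "biconn_piece G (verts H \<union> set xs, edges H \<union> path_edges xs)"
proof -
  define K where "K = (verts H \<union> set xs, edges H \<union> path_edges xs)"
  have H: "subgraph H G" "connected_graph H" "nonseparable H" using bp biconn_piece_iff[OF fin] by auto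
  have xs_G: "set xs \<subseteq> verts G" "path_edges xs \<subseteq> edges G" using xs by (auto simp: walk_iff_path_edges)
  have "\<forall>e\<in>path_edges xs. e \<subseteq> set xs" using path_edges_subset by blast
  then have sub: "subgraph K G" using H(1) xs_G unfolding subgraph_def K_def by auto
  have "xs \<noteq> []" using xs(1) by auto
  then have conn: "connected_graph K" unfolding K_def by (rule connected_add_path[OF H(2) _ ends(1)])
  have from_H: "reachable (delete_vertex K v) a b" if "reachable (delete_vertex H v) a b" for v a b
    using that by (rule reachable_delete_vertex_mono) (auto simp: K_def)
  have from_xs: "reachable (delete_vertex K v) a b"
    if "reachable (delete_vertex (path_graph xs) v) a b" for v a b
    using that by (rule reachable_mono) (auto simp: K_def path_graph_def)
  have "nonseparable K"
  proof (rule nonseparableI)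
    fix v assume "v \<in> verts K"
    obtain r where r: "r \<in> verts H - {v}" using ends by blast
    have "reachable (delete_vertex K v) u r" if u: "u \<in> verts K - {v}" for u
    proof (cases "u \<in> verts H")
      case True
      then show ?thesis using nonseparable_reachable_delete[OF H _ r] u from_H by blast
    next
      case False
      then have "u \<in> set xs" using u by (simp add: K_def)
      then obtain r' where r': "r' \<in> verts H - {v}" "reachable (delete_vertex (path_graph xs) v) u r'"
        using path_graph_delete_reaches_end[OF xs(2), of u v] u ends by auto
      have "reachable (delete_vertex H v) r' r" using nonseparable_reachable_delete[OF H r'(1) r] .
      then show ?thesis using from_xs[OF r'(2)] from_H by (blast intro: reachable_trans)
    qed
    then show "\<exists>r\<in>verts K - {v}. \<forall>u\<in>verts K - {v}. reachable (delete_vertex K v) u r"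
      using r by (auto simp: K_def)
  qed
  then show ?thesis using sub conn biconn_piece_iff[OF fin] unfolding K_def by blast
qed

lemma biconn_piece_union:
  assumes fin: "finite (verts G)" and bp: "biconn_piece G H1" "biconn_piece G H2"
    and xy: "x \<in> verts H1" "x \<in> verts H2" "y \<in> verts H1" "y \<in> verts H2" "x \<noteq> y"
  shows "biconn_piece G (verts H1 \<union> verts H2, edges H1 \<union> edges H2)"
proof -
  define U where "U = (verts H1 \<union> verts H2, edges H1 \<union> edges H2)"
  have H1: "subgraph H1 G" "connected_graph H1" "nonseparable H1" using bp biconn_piece_iff[OF fin] by auto
  have H2: "subgraph H2 G" "connected_graph H2" "nonseparable H2" using bp biconn_piece_iff[OF fin] by auto
  have sub: "subgraph U G" using H1(1) H2(1) unfolding subgraph_def U_def by auto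
  have conn: "connected_graph U"
  proof (rule connected_graphI[of x])
    show "x \<in> verts U" using xy by (simp add: U_def)
    fix u assume "u \<in> verts U"
    then have "reachable H1 u x \<or> reachable H2 u x"
      using H1(2) H2(2) xy unfolding connected_graph_def U_def by auto
    then show "reachable U u x"
    proof
      assume "reachable H1 u x" then show ?thesis by (rule reachable_mono) (auto simp: U_def)
    next
      assume "reachable H2 u x" then show ?thesis by (rule reachable_mono) (auto simp: U_def)
    qed
  qed
  have "nonseparable U"
  proof (rule nonseparableI)
    fix v assume "v \<in> verts U"
    obtain c where c: "c \<in> verts H1" "c \<in> verts H2" "c \<noteq> v" using xy by blast
    have "reachable (delete_vertex U v) u c" if u: "u \<in> verts U - {v}" for u
    proof (cases "u \<in> verts H1")
      case True
      then have "reachable (delete_vertex H1 v) u c" using u c by (intro nonseparable_reachable_delete[OF H1]) auto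
      then show ?thesis by (rule reachable_delete_vertex_mono) (auto simp: U_def)
    next
      case False
      then have "reachable (delete_vertex H2 v) u c" using u c
        by (intro nonseparable_reachable_delete[OF H2]) (auto simp: U_def)
      then show ?thesis by (rule reachable_delete_vertex_mono) (auto simp: U_def)
    qed
    then show "\<exists>r\<in>verts U - {v}. \<forall>u\<in>verts U - {v}. reachable (delete_vertex U v) u r"
      using c by (auto simp: U_def)
  qed
  then show ?thesis using sub conn biconn_piece_iff[OF fin] unfolding U_def by blast
qed

lemma subgraph_trans: "subgraph A B \<Longrightarrow> subgraph B C \<Longrightarrow> subgraph A C"
  unfolding subgraph_def by blast

lemma sgraph_eqI: "verts A = verts B \<Longrightarrow> edges A = edges B \<Longrightarrow> A = (B :: 'a sgraph)"
  unfolding verts_def edges_def by (simp add: prod_eq_iff)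

locale conn_graph =
  fixes G :: "'a sgraph"
  assumes wf: "wf_graph G" and conn: "connected_graph G"
begin

lemma finite_verts: "finite (verts G)" using wf by (simp add: wf_graph_def)

lemma edge_doubleton: "e \<in> edges G \<Longrightarrow> \<exists>x y. x \<noteq> y \<and> e = {x,y} \<and> x \<in> verts G \<and> y \<in> verts G"
  using wf by (simp add: wf_graph_def)

lemma finite_edges: "finite (edges G)"
proof -
  have "edges G \<subseteq> Pow (verts G)" using edge_doubleton by blast
  then show ?thesis using finite_verts by (meson finite_Pow_iff finite_subset)
qed

lemma block_biconn_piece: "is_block G B \<Longrightarrow> biconn_piece G B" by (simp add: is_block_def)

lemma is_blockD: "is_block G B \<Longrightarrow> subgraph B G \<and> connected_graph B \<and> nonseparable B"
  using block_biconn_piece biconn_piece_iff[OF finite_verts] by blast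

lemma biconn_piece_in_block:
  assumes "biconn_piece G H"
  shows "\<exists>B. is_block G B \<and> subgraph H B"
proof -
  define P where "P B \<longleftrightarrow> biconn_piece G B \<and> subgraph H B" for B
  define f where "f B = card (verts B) + card (edges B)" for B :: "'a sgraph"
  have fb: "f B < card (verts G) + card (edges G) + 1" if "P B" for B
  proof -
    have "subgraph B G" using that unfolding P_def biconn_piece_def by blast
    then have "card (verts B) \<le> card (verts G)" "card (edges B) \<le> card (edges G)"
      using finite_verts finite_edges by (auto simp: subgraph_def intro: card_mono)
    then show ?thesis unfolding f_def by simp
  qed
  have "P H" using assms unfolding P_def subgraph_def biconn_piece_def by blast
  then obtain B where B: "P B" "\<And>y. P y \<Longrightarrow> f y \<le> f B"
    using Lattices_Big.ex_has_greatest_nat[of P H f] fb by blast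
  have "is_block G B" unfolding is_block_def
  proof (intro conjI allI impI)
    show "biconn_piece G B" using B unfolding P_def by blast
    fix H' assume H': "biconn_piece G H' \<and> subgraph B H'"
    then have "P H'" using B(1) subgraph_trans unfolding P_def by blast
    then have le: "f H' \<le> f B" using B by blast
    have sg: "subgraph H' G" using H' unfolding biconn_piece_def by blast
    have fin': "finite (verts H')" "finite (edges H')"
      using sg finite_verts finite_edges by (auto simp: subgraph_def intro: finite_subset)
    have s: "verts B \<subseteq> verts H'" "edges B \<subseteq> edges H'" using H' unfolding subgraph_def by auto
    have c1: "card (verts B) \<le> card (verts H')" "card (edges B) \<le> card (edges H')"
      using s fin' by (auto intro: card_mono)
    then have "card (verts B) = card (verts H')" "card (edges B) = card (edges H')"
      using le unfolding f_def by linarith+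
    then have "verts B = verts H'" "edges B = edges H'"
      using card_subset_eq[OF fin'(1) s(1)] card_subset_eq[OF fin'(2) s(2)] by auto
    then show "H' = B" by (intro sgraph_eqI) auto
  qed
  then show ?thesis using B unfolding P_def by blast
qed

lemma vertex_biconn_piece: "u \<in> verts G \<Longrightarrow> biconn_piece G ({u}, {})"
  unfolding biconn_piece_iff[OF finite_verts] subgraph_def nonseparable_def connected_graph_def
  by (auto intro: reachable_refl)

lemma edge_biconn_piece:
  assumes "{a,b} \<in> edges G" "a \<noteq> b"
  shows "biconn_piece G ({a,b}, {{a,b}})"
proof -
  have ab: "a \<in> verts G" "b \<in> verts G" using edge_doubleton[OF assms(1)] assms(2) by (auto simp: doubleton_eq_iff)
  have "reachable ({a,b}, {{a,b}}) x y" if "x \<in> {a,b}" "y \<in> {a,b}" for x y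
  proof -
    have "reachable ({a,b}, {{a,b}}) a b" by (rule reachable_edge) auto
    then show ?thesis using that by (auto intro: reachable_sym reachable_refl)
  qed
  moreover have "reachable (delete_vertex ({a,b}, {{a,b}}) v) x y"
    if "v \<in> {a,b}" "x \<in> {a,b} - {v}" "y \<in> {a,b} - {v}" for v x y
  proof -
    have "x = y" using that by auto
    then show ?thesis using that by (auto intro: reachable_refl)
  qed
  ultimately show ?thesis
    unfolding biconn_piece_iff[OF finite_verts] subgraph_def nonseparable_def connected_graph_def using assms ab by auto
qed

lemma vertex_in_block: "u \<in> verts G \<Longrightarrow> \<exists>B. is_block G B \<and> u \<in> verts B"
  using biconn_piece_in_block[OF vertex_biconn_piece] unfolding subgraph_def by fastforce

lemma edge_in_block:
  assumes "{a,b} \<in> edges G" shows "\<exists>B. is_block G B \<and> a \<in> verts B \<and> b \<in> verts B"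
proof (cases "a = b")
  case True
  then show ?thesis using edge_doubleton[OF assms] by (auto simp: doubleton_eq_iff)
next
  case False
  then show ?thesis using biconn_piece_in_block[OF edge_biconn_piece[OF assms False]] unfolding subgraph_def by fastforce
qed

lemma block_eq_if_two_common_verts:
  assumes B: "is_block G B1" "is_block G B2" and xy: "x \<in> verts B1" "x \<in> verts B2" "y \<in> verts B1" "y \<in> verts B2" "x \<noteq> y"
  shows "B1 = B2"
proof -
  define U where "U = (verts B1 \<union> verts B2, edges B1 \<union> edges B2)"
  have "biconn_piece G U" unfolding U_def by (rule biconn_piece_union[OF finite_verts block_biconn_piece[OF B(1)] block_biconn_piece[OF B(2)] xy])
  moreover have "subgraph B1 U" "subgraph B2 U" using is_blockD[OF B(1)] is_blockD[OF B(2)]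
    unfolding U_def subgraph_def by auto
  ultimately have "U = B1" "U = B2" using B unfolding is_block_def by blast+
  then show ?thesis by simp
qed

lemma block_reachable_delete:
  assumes "is_block G B" "a \<in> verts B - {v}" "b \<in> verts B - {v}"
  shows "reachable (delete_vertex G v) a b"
proof -
  have p: "subgraph B G" "connected_graph B" "nonseparable B" using is_blockD[OF assms(1)] by auto
  have "reachable (delete_vertex B v) a b" by (rule nonseparable_reachable_delete[OF p assms(2,3)])
  moreover have "verts (delete_vertex B v) \<subseteq> verts (delete_vertex G v)"
    "edges (delete_vertex B v) \<subseteq> edges (delete_vertex G v)" using p(1) unfolding subgraph_def by auto
  ultimately show ?thesis by (rule reachable_mono)
qed

lemma block_absorbs_path:
  assumes B: "is_block G B"
    and p: "walk G p" "distinct p" "hd p \<in> verts B" "last p \<in> verts B" "hd p \<noteq> last p"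
  shows "set p \<subseteq> verts B"
proof -
  let ?K = "(verts B \<union> set p, edges B \<union> path_edges p)"
  have "biconn_piece G ?K" by (rule biconn_piece_add_path[OF finite_verts block_biconn_piece[OF B] p])
  moreover have "subgraph B ?K" using is_blockD[OF B] by (auto simp: subgraph_def)
  ultimately have "?K = B" using B unfolding is_block_def by blast
  then have "verts B \<union> set p = verts B" by (metis verts_pair)
  then show ?thesis by blast
qed

text \<open>A path from \<open>B\<^sub>1 - v\<close> into \<open>B\<^sub>2 - v\<close> avoiding \<open>v\<close>, continued inside \<open>B\<^sub>2\<close> back to
  \<open>v\<close>, would be an ear of \<open>B\<^sub>1\<close> through a vertex outside \<open>B\<^sub>1\<close>.\<close>

lemma blocks_separated_at_common_vertex:
  assumes B: "is_block G B1" "is_block G B2" "B1 \<noteq> B2" and v: "v \<in> verts B1" "v \<in> verts B2"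
    and a: "a \<in> verts B1 - {v}" and b: "b \<in> verts B2 - {v}"
  shows "\<not> reachable (delete_vertex G v) a b"
proof
  assume r: "reachable (delete_vertex G v) a b"
  have inter: "x = v" if "x \<in> verts B1" "x \<in> verts B2" for x
    using block_eq_if_two_common_verts[OF B(1,2) that v] B(3) by blast
  obtain xs where xs: "walk (delete_vertex G v) xs" "distinct xs" "hd xs = a" "last xs = b"
    using reachable_distinct_walk[OF r] by blast
  have aB2: "a \<notin> verts B2" using inter[of a] a by auto
  have "xs \<noteq> []" using xs(1) by auto
  then have "b \<in> set xs" using xs(4) by auto
  then obtain ys c zs where yz: "xs = ys @ c # zs" "ys \<noteq> []" "c \<in> verts B2"
    "set ys \<inter> verts B2 = {}" "walk (delete_vertex G v) ys" "{last ys, c} \<in> edges (delete_vertex G v)"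
    using walk_prefix_before_entry[OF xs(1), of "verts B2" b] xs(3) aB2 b by blast
  have cv: "c \<noteq> v" and last_ys: "{last ys, c} \<in> edges G" using yz(6) by auto
  have wys: "walk G ys" using yz(5) by (rule walk_mono) auto
  have "connected_graph B2" using is_blockD[OF B(2)] by simp
  then have "reachable B2 c v" using yz(3) v(2) unfolding connected_graph_def by simp
  from reachable_distinct_walk[OF this]
  obtain rs where rs: "walk B2 rs" "distinct rs" "hd rs = c" "last rs = v" by blast
  have "walk G rs"
    using rs(1) by (rule walk_mono) (use is_blockD[OF B(2)] in \<open>auto simp: subgraph_def\<close>)
  then have wp: "walk G (ys @ rs)" using wys last_ys rs(3) by (intro walk_append) auto
  have "set rs \<subseteq> verts B2" using rs(1) by (auto simp: walk_iff_path_edges)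
  then have dp: "distinct (ys @ rs)" using xs(2) yz(1,4) rs(2) by auto
  have rs_ne: "rs \<noteq> []" using rs(1) by auto
  have "hd (ys @ rs) = a" "last (ys @ rs) = v" using yz(1,2) xs(3) rs(4) rs_ne by simp_all
  then have "set (ys @ rs) \<subseteq> verts B1" using block_absorbs_path[OF B(1) wp dp] a v by simp
  moreover have "c \<in> set (ys @ rs)" using rs(3) rs_ne by auto
  ultimately show False using inter[of c] yz(3) cv by blast
qed

lemma edge_not_subset_singleton: "e \<in> edges G \<Longrightarrow> \<not> e \<subseteq> {v}"
  using edge_doubleton by fastforce

lemma block_other_vertex:
  assumes B: "is_block G B" and two: "2 \<le> card (verts G)"
  shows "\<exists>a\<in>verts B. a \<noteq> v"
proof (rule ccontr)
  assume "\<not> (\<exists>a\<in>verts B. a \<noteq> v)"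
  then have vB: "verts B = {v}" using is_blockD[OF B] unfolding connected_graph_def by auto
  then have "\<forall>e\<in>edges B. e \<in> edges G \<and> e \<subseteq> {v}" using is_blockD[OF B] unfolding subgraph_def by auto
  then have eB: "edges B = {}" using edge_not_subset_singleton by blast
  have vG: "v \<in> verts G" using is_blockD[OF B] vB unfolding subgraph_def by auto
  moreover have "verts G \<noteq> {v}" using two by auto
  ultimately obtain x where x: "x \<in> verts G" "x \<noteq> v" by blast
  then have "reachable G v x" using conn vG unfolding connected_graph_def by blast
  then obtain u where vu: "{v,u} \<in> edges G" by (rule reachable_first_edge) (use x in auto)
  then have "v \<noteq> u" using edge_not_subset_singleton[of "{v,u}" v] by auto
  then have "biconn_piece G ({v,u}, {{v,u}})" by (rule edge_biconn_piece[OF vu])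
  moreover have "subgraph B ({v,u}, {{v,u}})" using vB eB unfolding subgraph_def by auto
  ultimately have "({v,u}, {{v,u}}) = B" using B unfolding is_block_def by blast
  then have "verts B = {v,u}" by (metis verts_pair)
  then show False using vB \<open>v \<noteq> u\<close> by auto
qed

lemma block_unique_if_card_lt_2:
  assumes "card (verts G) < 2" "is_block G B1" "is_block G B2"
  shows "B1 = B2"
proof -
  have ne: "verts G \<noteq> {}" using conn unfolding connected_graph_def by blast
  then have "0 < card (verts G)" using finite_verts by (simp add: card_gt_0_iff)
  then have "card (verts G) = 1" using assms(1) by linarith
  then obtain u where vG: "verts G = {u}" by (rule card_1_singletonE)
  have noe: "edges G = {}"
  proof (rule ccontr)
    assume "edges G \<noteq> {}"
    then obtain e where "e \<in> edges G" by blast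
    then show False using edge_doubleton[of e] vG by auto
  qed
  have "verts B = {u} \<and> edges B = {}" if "is_block G B" for B
  proof -
    have p: "subgraph B G" "connected_graph B" using is_blockD[OF that] by auto
    then have "verts B \<noteq> {}" "verts B \<subseteq> {u}" "edges B = {}"
      using vG noe unfolding subgraph_def connected_graph_def by auto
    then show ?thesis by auto
  qed
  then have "verts B1 = verts B2" "edges B1 = edges B2" using assms(2,3) by auto
  then show ?thesis by (rule sgraph_eqI)
qed

lemma cut_vertex_if_in_two_blocks:
  assumes B: "is_block G B1" "is_block G B2" "B1 \<noteq> B2" and u: "u \<in> verts B1" "u \<in> verts B2"
  shows "cut_vertex G u"
proof -
  have two: "2 \<le> card (verts G)"
  proof (rule ccontr)
    assume "\<not> 2 \<le> card (verts G)"
    then have "B1 = B2" using block_unique_if_card_lt_2 B(1,2) by simp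
    then show False using B(3) by simp
  qed
  obtain a where a: "a \<in> verts B1" "a \<noteq> u" using block_other_vertex[OF B(1) two] by blast
  obtain b where b: "b \<in> verts B2" "b \<noteq> u" using block_other_vertex[OF B(2) two] by blast
  have nr: "\<not> reachable (delete_vertex G u) a b" using blocks_separated_at_common_vertex[OF B u] a b by simp
  have s: "verts B1 \<subseteq> verts G" "verts B2 \<subseteq> verts G"
    using is_blockD[OF B(1)] is_blockD[OF B(2)] by (auto simp: subgraph_def)
  have "u \<in> verts G" "a \<in> verts G - {u}" "b \<in> verts G - {u}" using s a b u by auto
  then show ?thesis unfolding cut_vertex_iff[OF finite_verts conn] using nr by blast
qed

end

section \<open>Centroids of weighted trees\<close>

locale weighted_tree =
  fixes T :: "'b sgraph" and w :: "'b \<Rightarrow> nat" and n :: nat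
  assumes finite_tree: "finite (verts T)"
  and tree_nonempty: "verts T \<noteq> {}"
  and tree_edges: "\<And>e. e \<in> edges T \<Longrightarrow> \<exists>x y. x \<noteq> y \<and> e = {x,y} \<and> x \<in> verts T \<and> y \<in> verts T"
  and tree_connected: "\<And>x y. x \<in> verts T \<Longrightarrow> y \<in> verts T \<Longrightarrow> reachable T x y"
  and tree_bridge: "\<And>x y. {x,y} \<in> edges T \<Longrightarrow> \<not> reachable (verts T, edges T - {{x,y}}) y x"
  and total_weight: "set_weight w (verts T) = n"
  and total_pos: "0 < n"
  and edge_weight_pos: "\<And>x y. {x,y} \<in> edges T \<Longrightarrow> 0 < w x \<or> 0 < w y"
    \<comment> \<open>in the block tree, the cut vertex of an edge has weight 1\<close>
begin

abbreviation V where "V \<equiv> verts T"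
abbreviation E where "E \<equiv> edges T"
definition T_without :: "'b \<Rightarrow> 'b \<Rightarrow> 'b sgraph" where "T_without x y = (V, E - {{x,y}})"
text \<open>For an edge \<open>{x,y}\<close>, \<open>branch x y\<close> is the subtree of \<open>x\<close> that contains \<open>y\<close>.\<close>
definition branch :: "'b \<Rightarrow> 'b \<Rightarrow> 'b set" where "branch x y = side_of_edge T {x,y} y"
abbreviation W where "W \<equiv> set_weight w"
definition comp_at :: "'b \<Rightarrow> 'b \<Rightarrow> 'b set" where "comp_at x z = {u \<in> V - {x}. reachable (delete_vertex T x) z u}"

lemma T_without_sym: "T_without x y = T_without y x" unfolding T_without_def by (simp add: insert_commute)
lemma verts_T_without[simp]: "verts (T_without x y) = V" by (simp add: T_without_def)
lemma edges_T_without[simp]: "edges (T_without x y) = E - {{x,y}}" by (simp add: T_without_def)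

lemma branch_eq: "branch x y = {z \<in> V. reachable (T_without x y) y z}"
  unfolding branch_def side_of_edge_def T_without_def by simp
lemma branch_eq_rev: "branch y x = {z \<in> V. reachable (T_without x y) x z}"
  unfolding branch_eq using T_without_sym by simp

lemma tree_edgeD: "{x,y} \<in> E \<Longrightarrow> x \<noteq> y \<and> x \<in> V \<and> y \<in> V"
proof -
  assume e: "{x,y} \<in> E"
  then obtain a b where ab: "a \<noteq> b" "{x,y} = {a,b}" "a \<in> V" "b \<in> V" using tree_edges by blast
  then show ?thesis by (auto simp: doubleton_eq_iff)
qed

lemma branch_subset: "branch x y \<subseteq> V" unfolding branch_eq by auto

lemma root_in_branch: "{x,y} \<in> E \<Longrightarrow> y \<in> branch x y"
  unfolding branch_eq using tree_edgeD by (auto intro: reachable_refl)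

lemma base_notin_branch: "{x,y} \<in> E \<Longrightarrow> x \<notin> branch x y"
  unfolding branch_eq T_without_def using tree_bridge by auto

lemma opposite_branches_disjoint: assumes "{x,y} \<in> E" shows "branch x y \<inter> branch y x = {}"
proof (rule ccontr)
  assume "branch x y \<inter> branch y x \<noteq> {}"
  then obtain z where "reachable (T_without x y) y z" "reachable (T_without x y) x z"
    unfolding branch_eq[of x y] branch_eq_rev[where x=x and y=y] by blast
  then have "reachable (T_without x y) y x" by (meson reachable_sym reachable_trans)
  then show False using tree_bridge[OF assms] unfolding T_without_def by simp
qed

lemma opposite_branches_cover: assumes e: "{x,y} \<in> E" shows "branch x y \<union> branch y x = V"
proof
  show "branch x y \<union> branch y x \<subseteq> V" using branch_subset by auto
  show "V \<subseteq> branch x y \<union> branch y x"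
  proof
    fix z assume z: "z \<in> V"
    have xV: "x \<in> V" using tree_edgeD[OF e] by simp
    have r: "reachable T x z" using tree_connected[OF xV z] .
    show "z \<in> branch x y \<union> branch y x"
      using r
    proof (induction rule: reachable_induct)
      case base then show ?case using root_in_branch[of y x] e by (simp add: insert_commute)
    next
      case (step a b)
      show ?case
      proof (cases "{a,b} = {x,y}")
        case True
        then have "b = x \<or> b = y" by (auto simp: doubleton_eq_iff)
        then show ?thesis using root_in_branch[OF e] root_in_branch[of y x] e by (auto simp: insert_commute)
      next
        case False
        then have "reachable (T_without x y) a b" using step by (intro reachable_edge) auto
        then show ?thesis using step.IH unfolding branch_eq[of x y] branch_eq_rev[where x=x and y=y]
          using reachable_in[OF \<open>reachable (T_without x y) a b\<close>] by (auto intro: reachable_trans)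
      qed
    qed
  qed
qed

lemma reachable_delete_vertex_if_avoiding:
  assumes "reachable (V, E - F) s u" "\<And>z. reachable (V, E - F) s z \<Longrightarrow> z \<noteq> x"
  shows "reachable (delete_vertex T x) s u"
  using assms(1)
proof (induction rule: reachable_induct)
  case base
  have sV: "s \<in> V" using reachable_in[OF assms(1)] by simp
  then have "reachable (V, E - F) s s" by (intro reachable_refl) simp
  then have "s \<noteq> x" by (rule assms(2))
  note sV this
  then show ?case by (intro reachable_refl) simp
next
  case (step a b)
  have "a \<noteq> x" using assms(2)[OF step(1)] .
  have "reachable (V, E - F) a b" by (rule reachable_edge[OF step.hyps(2-4)])
  with step(1) have "reachable (V, E - F) s b" by (rule reachable_trans)
  then have "b \<noteq> x" using assms(2) by blast
  then have "reachable (delete_vertex T x) a b" using step \<open>a \<noteq> x\<close> by (intro reachable_edge) auto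
  with step.IH show ?case by (rule reachable_trans)
qed

lemma comp_at_eq_branch: assumes e: "{x,y} \<in> E" shows "comp_at x y = branch x y"
proof
  show "comp_at x y \<subseteq> branch x y"
  proof
    fix z assume "z \<in> comp_at x y"
    then have z: "z \<in> V" "reachable (delete_vertex T x) y z" unfolding comp_at_def by auto
    have "reachable (T_without x y) y z" using z(2) by (rule reachable_mono) auto
    then show "z \<in> branch x y" unfolding branch_eq using z by simp
  qed
  show "branch x y \<subseteq> comp_at x y"
  proof
    fix z assume z: "z \<in> branch x y"
    have "reachable (V, E - {{x,y}}) y z" using z unfolding branch_eq T_without_def by simp
    moreover have "z' \<noteq> x" if "reachable (V, E - {{x,y}}) y z'" for z'
    proof -
      have "z' \<in> branch x y" using that reachable_in[OF that] unfolding branch_eq T_without_def by simp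
      then show ?thesis using base_notin_branch[OF e] by auto
    qed
    ultimately have "reachable (delete_vertex T x) y z" by (rule reachable_delete_vertex_if_avoiding)
    then show "z \<in> comp_at x y" unfolding comp_at_def using z branch_subset base_notin_branch[OF e] by auto
  qed
qed

lemma comp_at_eq: "reachable (delete_vertex T x) z z' \<Longrightarrow> comp_at x z = comp_at x z'"
  unfolding comp_at_def by (auto intro: reachable_trans reachable_sym)

lemma subtrees_of_eq_comp_at: "subtrees_of T x = comp_at x ` (V - {x})"
  unfolding subtrees_of_def components_def comp_at_def by simp

lemma finite_subtrees: "finite (subtrees_of T x)" unfolding subtrees_of_eq_comp_at using finite_tree by simp

lemma subtree_is_branch:
  assumes x: "x \<in> V" and K: "K \<in> subtrees_of T x"
  shows "\<exists>y. {x,y} \<in> E \<and> K = branch x y"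
proof -
  obtain z where z: "z \<in> V - {x}" "K = comp_at x z" using K unfolding subtrees_of_eq_comp_at by blast
  obtain xs where xs: "walk T xs" "distinct xs" "hd xs = z" "last xs = x"
    using reachable_distinct_walk[OF tree_connected[of z x]] z x by blast
  have "x \<in> set xs" using xs by (metis last_in_set walk_Nil)
  then obtain ys zs where yz: "xs = ys @ x # zs" "x \<notin> set ys" by (meson split_list_first)
  have yne: "ys \<noteq> []" using yz xs(3) z(1) by (cases ys) auto
  have "walk T ((ys @ [x]) @ zs)" using xs(1) yz(1) by simp
  then have w1: "walk T (ys @ [x])" by (rule walk_prefix) simp
  have wys: "walk T ys" using walk_prefix[OF w1 yne] .
  have pe: "path_edges (ys @ [x]) \<subseteq> E" using w1 by (simp add: walk_iff_path_edges)
  have el: "{last ys, x} \<in> E" using pe path_edges_snoc[OF yne, of x] by simp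
  have "walk (delete_vertex T x) ys"
    unfolding walk_iff_path_edges using wys yz(2) path_edges_subset[of _ ys] by (auto simp: walk_iff_path_edges)
  then have "reachable (delete_vertex T x) z (last ys)"
    using walk_reachable yne yz(1) xs(3) by fastforce
  then have "K = comp_at x (last ys)" using z(2) comp_at_eq by blast
  also have "\<dots> = branch x (last ys)" using comp_at_eq_branch el by (simp add: insert_commute)
  finally show ?thesis using el by (auto simp: insert_commute)
qed

lemma branch_subtree: assumes e: "{x,y} \<in> E" shows "branch x y \<in> subtrees_of T x"
proof -
  have "y \<in> V - {x}" using tree_edgeD[OF e] by auto
  then show ?thesis unfolding subtrees_of_eq_comp_at using comp_at_eq_branch[OF e] by (metis image_eqI)
qed

lemma branches_disjoint:
  assumes e: "{x,y} \<in> E" "{x,z} \<in> E" and yz: "y \<noteq> z"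
  shows "branch x y \<inter> branch x z = {}"
proof (rule ccontr)
  assume "branch x y \<inter> branch x z \<noteq> {}"
  then obtain u where u: "u \<in> comp_at x y" "u \<in> comp_at x z" using comp_at_eq_branch[OF e(1)] comp_at_eq_branch[OF e(2)] by auto
  have r0: "reachable (delete_vertex T x) y u" "reachable (delete_vertex T x) z u" using u unfolding comp_at_def by auto
  have "reachable (delete_vertex T x) y z" using r0(1) reachable_sym[OF r0(2)] by (rule reachable_trans)
  then have r1: "reachable (T_without x y) y z" by (rule reachable_mono) auto
  have xy: "x \<noteq> y" "x \<noteq> z" using tree_edgeD[OF e(1)] tree_edgeD[OF e(2)] by auto
  have ne: "{z,x} \<noteq> {x,y}"
  proof
    assume "{z,x} = {x,y}"
    then have "z \<in> {x,y}" by blast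
    then show False using xy yz by auto
  qed
  have "{z,x} \<in> E" using e(2) by (simp add: insert_commute)
  then have "{z,x} \<in> edges (T_without x y)" using ne by simp
  then have "reachable (T_without x y) z x" using tree_edgeD[OF e(2)] by (intro reachable_edge) auto
  then have "reachable (T_without x y) y x" using r1 by (rule reachable_trans[rotated])
  then show False using tree_bridge[OF e(1)] unfolding T_without_def by simp
qed

lemma subtree_subset: "x \<in> V \<Longrightarrow> K \<in> subtrees_of T x \<Longrightarrow> K \<subseteq> V - {x}"
  using subtree_is_branch branch_subset base_notin_branch by blast

lemma W_union_disjoint: "finite A \<Longrightarrow> finite B \<Longrightarrow> A \<inter> B = {} \<Longrightarrow> W (A \<union> B) = W A + W B"
  unfolding set_weight_def by (rule sum.union_disjoint)

lemma W_mono: "A \<subseteq> B \<Longrightarrow> finite B \<Longrightarrow> W A \<le> W B"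
  unfolding set_weight_def by (rule sum_mono2) auto

lemma W_V: "W V = n" using total_weight by simp

lemma finite_branch: "finite (branch x y)" using branch_subset finite_tree finite_subset by blast

lemma W_opposite_branches: assumes e: "{x,y} \<in> E" shows "W (branch x y) + W (branch y x) = n"
  using W_union_disjoint[OF finite_branch finite_branch opposite_branches_disjoint[OF e]] opposite_branches_cover[OF e] W_V by simp

lemma W_minus: "x \<in> A \<Longrightarrow> finite A \<Longrightarrow> W (A - {x}) = W A - w x"
  unfolding set_weight_def by (simp add: sum_diff1_nat)

lemma W_insert: "finite A \<Longrightarrow> x \<notin> A \<Longrightarrow> W (insert x A) = w x + W A"
  unfolding set_weight_def by simp

lemma weight_le_W: "x \<in> A \<Longrightarrow> finite A \<Longrightarrow> w x \<le> W A"
  unfolding set_weight_def by (rule member_le_sum) auto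

lemma hs_ge: "K \<in> subtrees_of T x \<Longrightarrow> W K \<le> hs T w x"
  unfolding hs_def using finite_subtrees by (intro Max_ge) auto

lemma hs_le: "(\<And>K. K \<in> subtrees_of T x \<Longrightarrow> W K \<le> M) \<Longrightarrow> hs T w x \<le> M"
  unfolding hs_def using finite_subtrees by (subst Max_le_iff) auto

lemma hs_attained: "0 < hs T w x \<Longrightarrow> \<exists>K\<in>subtrees_of T x. W K = hs T w x"
proof -
  assume p: "0 < hs T w x"
  have "hs T w x \<in> insert 0 (set_weight w ` subtrees_of T x)"
    unfolding hs_def using finite_subtrees by (intro Max_in) auto
  then show ?thesis using p by auto
qed

lemma W_branch_le_hs: "{x,y} \<in> E \<Longrightarrow> W (branch x y) \<le> hs T w x"
  using hs_ge branch_subtree by blast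

lemma subtree_at_neighbour: assumes e: "{c,y} \<in> E" and K: "K \<in> subtrees_of T y"
  shows "K = branch y c \<or> K \<subseteq> branch c y - {y}"
proof -
  have e': "{y,c} \<in> E" using e by (simp add: insert_commute)
  have yV: "y \<in> V" using tree_edgeD[OF e] by simp
  obtain z where z: "{y,z} \<in> E" "K = branch y z" using subtree_is_branch[OF yV K] by blast
  show ?thesis
  proof (cases "z = c")
    case True then show ?thesis using z by simp
  next
    case False
    have "K \<inter> branch y c = {}" using branches_disjoint[OF z(1) e' False] z by simp
    moreover have "K \<subseteq> V - {y}" using subtree_subset[OF yV K] .
    ultimately show ?thesis using opposite_branches_cover[OF e] by blast
  qed
qed

lemma hs_neighbour_le: assumes e: "{c,y} \<in> E"
  shows "hs T w y \<le> max (n - W (branch c y)) (W (branch c y) - w y)"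
proof (rule hs_le)
  fix K assume K: "K \<in> subtrees_of T y"
  have s: "W (branch y c) = n - W (branch c y)" using W_opposite_branches[OF e] by simp
  have W_rest: "W (branch c y - {y}) = W (branch c y) - w y" using W_minus[OF root_in_branch[OF e] finite_branch] .
  from subtree_at_neighbour[OF e K] show "W K \<le> max (n - W (branch c y)) (W (branch c y) - w y)"
  proof
    assume "K = branch y c" then show ?thesis using s by simp
  next
    assume "K \<subseteq> branch c y - {y}"
    then have "W K \<le> W (branch c y - {y})" using finite_branch by (intro W_mono) auto
    then show ?thesis using W_rest by simp
  qed
qed

definition hs_min :: nat where "hs_min = Min (hs T w ` V)"

lemma hs_min_le: "y \<in> V \<Longrightarrow> hs_min \<le> hs T w y"
  unfolding hs_min_def using finite_tree by (intro Min_le) auto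

lemma hs_min_attained: "\<exists>c\<in>V. hs T w c = hs_min"
proof -
  have "hs_min \<in> hs T w ` V" unfolding hs_min_def using finite_tree tree_nonempty by (intro Min_in) auto
  then show ?thesis by auto
qed

lemma centroid_iff: "centroid T w x \<longleftrightarrow> x \<in> V \<and> hs T w x = hs_min"
proof
  assume c: "centroid T w x"
  obtain c0 where "c0 \<in> V" "hs T w c0 = hs_min" using hs_min_attained by blast
  then show "x \<in> V \<and> hs T w x = hs_min" using c hs_min_le unfolding centroid_def by (metis le_antisym)
next
  assume "x \<in> V \<and> hs T w x = hs_min"
  then show "centroid T w x" unfolding centroid_def using hs_min_le by auto
qed

lemma comp_at_subtree: "z \<in> V - {x} \<Longrightarrow> comp_at x z \<in> subtrees_of T x"
  unfolding subtrees_of_eq_comp_at by blast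

lemma comp_at_self: "z \<in> V - {x} \<Longrightarrow> z \<in> comp_at x z"
  unfolding comp_at_def by (auto intro: reachable_refl)

lemma finite_comp_at: "finite (comp_at x z)" unfolding comp_at_def using finite_tree by simp

lemma comp_at_edge_closed:
  assumes "u \<in> comp_at x a" "{u,z} \<in> E" "z \<noteq> x"
  shows "z \<in> comp_at x a"
proof -
  have "reachable (delete_vertex T x) u z"
    using assms tree_edgeD[OF assms(2)] unfolding comp_at_def by (intro reachable_edge) auto
  then show ?thesis using assms(1) tree_edgeD[OF assms(2)] assms(3) unfolding comp_at_def
    by (auto intro: reachable_trans)
qed

lemma opposite_branch_subset_comp_at:
  assumes e: "{c,y} \<in> E" and x: "x \<in> branch c y"
  shows "branch y c \<subseteq> comp_at x c"
proof
  fix u assume u: "u \<in> branch y c"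
  have xc: "x \<notin> branch y c" using x opposite_branches_disjoint[OF e] by blast
  have r: "reachable (V, E - {{c,y}}) c u" using u unfolding branch_eq_rev[where x=c and y=y] T_without_def by simp
  have "z \<noteq> x" if "reachable (V, E - {{c,y}}) c z" for z
  proof -
    have "z \<in> branch y c" unfolding branch_eq_rev[where x=c and y=y] T_without_def using that reachable_in[OF that] by simp
    then show ?thesis using xc by auto
  qed
  then have "reachable (delete_vertex T x) c u" using r reachable_delete_vertex_if_avoiding by blast
  then show "u \<in> comp_at x c" unfolding comp_at_def using reachable_in by fastforce
qed

lemma hs_lower_bound:
  assumes c: "centroid T w c" and x: "x \<in> V" "x \<noteq> c"
  shows "n - hs_min \<le> hs T w x"
proof -
  have cV: "c \<in> V" and hc: "hs T w c = hs_min" using c centroid_iff by auto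
  have K: "comp_at c x \<in> subtrees_of T c" using x by (intro comp_at_subtree) auto
  obtain y where y: "{c,y} \<in> E" "comp_at c x = branch c y" using subtree_is_branch[OF cV K] by blast
  have xs: "x \<in> branch c y" using comp_at_self[of x c] x y(2) by auto
  have s: "branch y c \<subseteq> comp_at x c" using opposite_branch_subset_comp_at[OF y(1) xs] .
  have "W (branch y c) \<le> W (comp_at x c)" using s finite_comp_at by (intro W_mono)
  also have "\<dots> \<le> hs T w x" using comp_at_subtree[of c x] cV x by (intro hs_ge) auto
  finally have a: "W (branch y c) \<le> hs T w x" .
  have "W (branch c y) \<le> hs_min" using W_branch_le_hs[OF y(1)] hc by simp
  then show ?thesis using a W_opposite_branches[OF y(1)] by linarith
qed

lemma centroid_unique_if_light:
  assumes c: "centroid T w c" and lt: "2 * hs_min < n"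
  shows "centroids T w = {c}"
proof -
  have eqc: "x = c" if "centroid T w x" for x
  proof (rule ccontr)
    assume "x \<noteq> c"
    have xV: "x \<in> V" and hx: "hs T w x = hs_min" using that centroid_iff by auto
    have "n - hs_min \<le> hs T w x" using hs_lower_bound[OF c xV \<open>x \<noteq> c\<close>] .
    then show False using hx lt by linarith
  qed
  show ?thesis
  proof (intro equalityI subsetI)
    fix x assume "x \<in> centroids T w"
    then have "centroid T w x" unfolding centroids_def by simp
    then show "x \<in> {c}" using eqc by simp
  next
    fix x assume "x \<in> {c}"
    then show "x \<in> centroids T w" using c unfolding centroids_def by simp
  qed
qed

lemma centroid_if_half_branch:
  assumes e: "{a,z} \<in> E" and half: "2 * hs_min = n" and Wz: "W (branch a z) = hs_min"
  shows "centroid T w z"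
proof -
  have "hs T w z \<le> max (n - W (branch a z)) (W (branch a z) - w z)" using hs_neighbour_le[OF e] .
  then have "hs T w z \<le> hs_min" using half Wz by simp
  moreover have "z \<in> V" using tree_edgeD[OF e] by simp
  ultimately show ?thesis using hs_min_le centroid_iff by (metis le_antisym)
qed

lemma hs_lt_min_if_overweight:
  assumes e: "{y,z} \<in> E" and W: "W (branch y z) = hs_min" and over: "n < 2 * hs_min" and wz: "0 < w z"
  shows "hs T w z < hs_min"
proof -
  have "hs T w z \<le> max (n - hs_min) (hs_min - w z)" using hs_neighbour_le[OF e] W by simp
  moreover have "n - hs_min < hs_min" "hs_min - w z < hs_min" using over wz by auto
  ultimately show ?thesis by linarith
qed

lemma heavy_centroid_edge:
  assumes c: "centroid T w c" and ge: "n \<le> 2 * hs_min"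
  shows "2 * hs_min = n \<and> (\<exists>y. {c,y} \<in> E \<and> W (branch c y) = hs_min)"
proof -
  have cV: "c \<in> V" and hc: "hs T w c = hs_min" using c centroid_iff by auto
  have mpos: "0 < hs_min" using ge total_pos by linarith
  obtain K where K: "K \<in> subtrees_of T c" "W K = hs_min" using hs_attained[of c] hc mpos by auto
  obtain y where y: "{c,y} \<in> E" "K = branch c y" using subtree_is_branch[OF cV K(1)] by blast
  have Wy: "W (branch c y) = hs_min" using K y by simp
  have "2 * hs_min = n"
  proof (rule ccontr)
    assume "2 * hs_min \<noteq> n"
    then have over: "n < 2 * hs_min" using ge by simp
    have yV: "y \<in> V" using tree_edgeD[OF y(1)] by simp
    have hy: "hs_min \<le> hs T w y" using hs_min_le[OF yV] .
    obtain K2 where K2: "K2 \<in> subtrees_of T y" "W K2 = hs T w y" using hs_attained[of y] hy mpos by auto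
    from subtree_at_neighbour[OF y(1) K2(1)] show False
    proof
      assume "K2 = branch y c"
      then have "W K2 = n - hs_min" using W_opposite_branches[OF y(1)] Wy by simp
      then show False using K2 hy over by simp
    next
      assume "K2 \<subseteq> branch c y - {y}"
      then have "W K2 \<le> W (branch c y - {y})" using finite_branch by (intro W_mono) auto
      also have "\<dots> = hs_min - w y" using W_minus[OF root_in_branch[OF y(1)] finite_branch] Wy by simp
      finally have le: "W K2 \<le> hs_min - w y" .
      then have wy: "w y = 0" and WK2: "W K2 = hs_min" using K2 hy mpos by auto
      obtain z where z: "{y,z} \<in> E" "K2 = branch y z" using subtree_is_branch[OF yV K2(1)] by blast
      have "0 < w z" using edge_weight_pos[OF z(1)] wy by simp
      then have "hs T w z < hs_min" using hs_lt_min_if_overweight[OF z(1) _ over] WK2 z(2) by simp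
      then show False using hs_min_le[of z] tree_edgeD[OF z(1)] by fastforce
    qed
  qed
  then show ?thesis using y Wy by blast
qed

lemma insert_opposite_branch_subset_comp_at:
  assumes e: "{a,b} \<in> E" and x: "x \<in> branch a b" "x \<noteq> b"
  shows "insert b (branch b a) \<subseteq> comp_at x a"
proof -
  have "x \<noteq> a" using x(1) base_notin_branch[OF e] by auto
  then have "a \<in> comp_at x a" using tree_edgeD[OF e] by (intro comp_at_self) auto
  then have "b \<in> comp_at x a" using comp_at_edge_closed e x(2) by blast
  then show ?thesis using opposite_branch_subset_comp_at[OF e x(1)] by blast
qed

text \<open>A third centroid \<open>x\<close> behind the heavy edge \<open>{a,b}\<close>: the subtree of \<open>x\<close> containing \<open>a\<close>
  already carries weight \<open>n/2 + w b\<close>, which forces \<open>w b = 0\<close> and leaves no room for a vertex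
  between \<open>b\<close> and \<open>x\<close>.\<close>

lemma third_centroid:
  assumes e: "{a,b} \<in> E" and half: "2 * hs_min = n"
    and Wab: "W (branch a b) = hs_min" and Wba: "W (branch b a) = hs_min"
    and x: "centroid T w x" "x \<noteq> a" "x \<noteq> b" "x \<in> branch a b"
  shows "w b = 0 \<and> {b,x} \<in> E \<and> W (branch b x) = hs_min"
proof -
  have xV: "x \<in> V" and hx: "hs T w x = hs_min" using x(1) centroid_iff by auto
  have aV: "a \<in> V" and bV: "b \<in> V" using tree_edgeD[OF e] by auto
  have e': "{b,a} \<in> E" using e by (simp add: insert_commute)
  let ?K = "comp_at x a" and ?A = "insert b (branch b a)"
  have WK: "W ?K \<le> hs_min" using hs_ge[OF comp_at_subtree] aV x(2) hx by fastforce
  have A: "?A \<subseteq> ?K" by (rule insert_opposite_branch_subset_comp_at[OF e x(4,3)])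
  have WA: "W ?A = w b + hs_min"
    using W_insert[OF finite_branch base_notin_branch[OF e']] Wba by simp
  then have wb: "w b = 0" using W_mono[OF A finite_comp_at] WK by simp
  obtain z where z: "{b,z} \<in> E" "comp_at b x = branch b z"
    using subtree_is_branch[OF bV comp_at_subtree] xV x(3) by blast
  have "x \<in> branch b z" using comp_at_self xV x(3) z(2) by blast
  then have za: "z \<noteq> a" using x(4) opposite_branches_disjoint[OF e] by blast
  have "z = x"
  proof (rule ccontr)
    assume zx: "z \<noteq> x"
    then have "z \<in> ?K" using A comp_at_edge_closed z(1) by blast
    moreover have "z \<notin> ?A"
      using branches_disjoint[OF z(1) e' za] root_in_branch[OF z(1)] tree_edgeD[OF z(1)] by blast
    ultimately have "W (insert z ?A) \<le> W ?K" using A by (intro W_mono finite_comp_at) auto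
    then have "w z + W ?A \<le> hs_min" using W_insert[OF _ \<open>z \<notin> ?A\<close>] finite_branch WK by simp
    moreover have "0 < w z" using edge_weight_pos[OF z(1)] wb by simp
    ultimately show False using WA wb by simp
  qed
  then have ebx: "{b,x} \<in> E" using z(1) by simp
  have "W (branch x b) \<le> hs_min" using W_branch_le_hs[of x b] ebx hx by (simp add: insert_commute)
  moreover have "W (branch b x) \<le> hs_min"
    using W_branch_le_hs[OF ebx] centroid_if_half_branch[OF e half Wab] centroid_iff by simp
  moreover have "W (branch b x) + W (branch x b) = n" using W_opposite_branches[OF ebx] .
  ultimately have "W (branch b x) = hs_min" using half by linarith
  then show ?thesis using wb ebx by simp
qed

lemma subtree_in_comp_at:
  assumes S: "subtree_set T S" "a \<notin> S" "s \<in> S"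
  shows "S \<subseteq> comp_at a s"
proof
  fix u assume u: "u \<in> S"
  have SV: "S \<subseteq> V" and cS: "connected_graph (induced T S)" using S(1) unfolding subtree_set_def by auto
  then have "reachable (induced T S) s u" using S(3) u unfolding connected_graph_def by simp
  then have "reachable (delete_vertex T a) s u" by (rule reachable_mono) (use SV S(2) in auto)
  then show "u \<in> comp_at a s" unfolding comp_at_def using u SV S(2) by auto
qed

lemma W_branch_lt_if_not_centroid:
  assumes e: "{a,z} \<in> E" and half: "2 * hs_min = n" and ha: "hs T w a = hs_min"
    and z: "\<not> centroid T w z"
  shows "W (branch a z) < hs_min"
  using W_branch_le_hs[OF e] ha centroid_if_half_branch[OF e half] z by fastforce

lemma subtree_in_side_bound:
  assumes e: "{a,b} \<in> E" and half: "2 * hs_min = n" and C: "centroids T w = {a,b}"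
    and S: "subtree_set T S" "S \<subseteq> branch b a" "a \<notin> S"
  shows "2 * (W S + 1) \<le> n"
proof -
  have aV: "a \<in> V" using tree_edgeD[OF e] by simp
  have ha: "hs T w a = hs_min" using C centroid_iff unfolding centroids_def by auto
  have "S \<noteq> {}" using S(1) unfolding subtree_set_def connected_graph_def by simp
  then obtain s where s: "s \<in> S" by blast
  then have sV: "s \<in> V - {a}" using S(2,3) branch_subset by auto
  obtain z where z: "{a,z} \<in> E" "comp_at a s = branch a z"
    using subtree_is_branch[OF aV comp_at_subtree[OF sV]] by blast
  have "s \<in> branch a z" "s \<in> branch b a" using z(2) comp_at_self[OF sV] s S(2) by auto
  then have "z \<noteq> b" using opposite_branches_disjoint[OF e] by blast
  moreover have "z \<noteq> a" using tree_edgeD[OF z(1)] by auto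
  ultimately have "W (branch a z) < hs_min"
    using W_branch_lt_if_not_centroid[OF z(1) half ha] C unfolding centroids_def by auto
  moreover have "W S \<le> W (branch a z)"
    using subtree_in_comp_at[OF S(1,3) s] z(2) finite_branch by (metis W_mono)
  ultimately show ?thesis using half by simp
qed

context
  fixes y a b
  assumes ea: "{y,a} \<in> E" and eb: "{y,b} \<in> E" and ab: "a \<noteq> b" and wy: "w y = 0"
    and half: "2 * hs_min = n" and Wa: "W (branch y a) = hs_min" and Wb: "W (branch y b) = hs_min"
begin

lemma subtrees_of_middle: "subtrees_of T y = {branch y a, branch y b}"
proof -
  have yV: "y \<in> V" using tree_edgeD[OF ea] by simp
  have "K \<in> {branch y a, branch y b}" if K: "K \<in> subtrees_of T y" for K
  proof (rule ccontr)
    assume K_other: "K \<notin> {branch y a, branch y b}"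
    obtain z where z: "{y,z} \<in> E" "K = branch y z" using subtree_is_branch[OF yV K] by blast
    then have "z \<noteq> a" "z \<noteq> b" using K_other by auto
    then have disj: "branch y a \<inter> branch y z = {}" "branch y b \<inter> branch y z = {}"
      "branch y a \<inter> branch y b = {}"
      using branches_disjoint[OF ea z(1)] branches_disjoint[OF eb z(1)] branches_disjoint[OF ea eb ab]
      by auto
    have "W (branch y a) + W (branch y b) + W (branch y z) = W (branch y a \<union> branch y b \<union> branch y z)"
      using disj by (simp add: W_union_disjoint finite_branch Int_Un_distrib2)
    also have "\<dots> \<le> W V" using branch_subset finite_tree by (intro W_mono) auto
    finally have "W (branch y z) = 0" using Wa Wb W_V half by linarith
    moreover have "w z \<le> W (branch y z)" using weight_le_W[OF root_in_branch[OF z(1)] finite_branch] .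
    moreover have "0 < w z" using edge_weight_pos[OF z(1)] wy by simp
    ultimately show False by linarith
  qed
  then show ?thesis using branch_subtree[OF ea] branch_subtree[OF eb] by auto
qed

lemma centroids_eq_middle_and_ends: "centroids T w = {a, y, b}"
proof -
  have yV: "y \<in> V" using tree_edgeD[OF ea] by simp
  have ea': "{a,y} \<in> E" using ea by (simp add: insert_commute)
  have ca: "centroid T w a" using centroid_if_half_branch[OF ea half Wa] .
  have cb: "centroid T w b" using centroid_if_half_branch[OF eb half Wb] .
  have "hs T w y \<le> hs_min" by (rule hs_le) (use subtrees_of_middle Wa Wb in auto)
  then have cy: "centroid T w y" using hs_min_le[OF yV] yV centroid_iff by simp
  have Wa2: "W (branch a y) = hs_min" using W_opposite_branches[OF ea] Wa half by simp
  have others: "x \<in> {a,y,b}" if cx: "centroid T w x" for x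
  proof (rule ccontr)
    assume nx: "x \<notin> {a,y,b}"
    have "x \<in> V" using cx centroid_iff by simp
    then have "x \<in> branch y a \<union> branch a y" using opposite_branches_cover[OF ea] by simp
    then show False
    proof
      assume "x \<in> branch y a"
      then have "w a = 0" using third_centroid[OF ea half Wa Wa2 cx] nx by auto
      then show False using edge_weight_pos[OF ea] wy by simp
    next
      assume xs: "x \<in> branch a y"
      then have r: "{y,x} \<in> E \<and> W (branch y x) = hs_min" using third_centroid[OF ea' half Wa2 Wa cx] nx by auto
      then have "branch y x \<in> {branch y a, branch y b}" using branch_subtree[of y x] subtrees_of_middle by auto
      moreover have "x \<in> branch y x" using root_in_branch r by simp
      moreover have "branch y x \<inter> branch y a = {}" using branches_disjoint[of y x a] r ea nx by auto
      moreover have "branch y x \<inter> branch y b = {}" using branches_disjoint[of y x b] r eb nx by auto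
      ultimately show False by auto
    qed
  qed
  show ?thesis using others ca cb cy unfolding centroids_def by auto
qed

lemma central_centroids_eq_middle: "{c. central_centroid T w c} = {y}"
proof -
  have yV: "y \<in> V" and aV: "a \<in> V" and bV: "b \<in> V" and ya: "y \<noteq> a" and yb: "y \<noteq> b"
    using tree_edgeD[OF ea] tree_edgeD[OF eb] by auto
  have "{a,b} \<notin> E"
  proof
    assume eab: "{a,b} \<in> E"
    have "{a,b} \<noteq> {y,a}" "{b,y} \<noteq> {y,a}" using ab ya yb by (auto simp: doubleton_eq_iff)
    then have "reachable (V, E - {{y,a}}) a b" "reachable (V, E - {{y,a}}) b y"
      using eab eb aV bV yV by (auto intro!: reachable_edge simp: insert_commute)
    then have "reachable (V, E - {{y,a}}) a y" by (rule reachable_trans)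
    then show False using tree_bridge[OF ea] by simp
  qed
  then have ecc: "ecc (induced T {a,y,b}) y = 1" "ecc (induced T {a,y,b}) a = 2"
    "ecc (induced T {a,y,b}) b = 2"
    using ecc_path_of_three[of "induced T {a,y,b}" a y b] ea eb ya yb ab by auto
  have "centroid T w x \<longleftrightarrow> x \<in> {a, y, b}" for x
    using centroids_eq_middle_and_ends unfolding centroids_def by auto
  then show ?thesis
    using ecc unfolding central_centroid_def centroids_eq_middle_and_ends by auto
qed

lemma middle_centroid_case:
  "{c. central_centroid T w c} = {y} \<and> card (centroids T w) = 3 \<and>
     (\<exists>K1 K2. K1 \<noteq> K2 \<and> subtrees_of T y = {K1, K2} \<and> 2 * W K1 = n \<and> 2 * W K2 = n)"
proof -
  have "y \<noteq> a" "y \<noteq> b" using tree_edgeD[OF ea] tree_edgeD[OF eb] by auto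
  then have "card (centroids T w) = 3" using centroids_eq_middle_and_ends ab by simp
  moreover have "branch y a \<noteq> branch y b"
    using branches_disjoint[OF ea eb ab] root_in_branch[OF ea] by auto
  moreover have "2 * W (branch y a) = n" "2 * W (branch y b) = n" using Wa Wb half by simp_all
  ultimately show ?thesis using central_centroids_eq_middle subtrees_of_middle by blast
qed

end

lemma two_centroids_balanced:
  assumes e: "{a,b} \<in> E" and half: "2 * hs_min = n" and Wab: "W (branch a b) = hs_min"
    and C: "centroids T w = {a,b}"
  shows "\<forall>x\<in>{a,b}. 2 * W (side_of_edge T {a,b} x) = n \<and>
           (\<forall>S. subtree_set T S \<and> S \<subseteq> side_of_edge T {a,b} x \<and> x \<notin> S \<longrightarrow> 2 * (W S + 1) \<le> n)"
proof -
  have e': "{b,a} \<in> E" and C': "centroids T w = {b,a}" using e C by (simp_all add: insert_commute)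
  have Wba: "W (branch b a) = hs_min" using W_opposite_branches[OF e] Wab half by simp
  have sides: "side_of_edge T {a,b} a = branch b a" "side_of_edge T {a,b} b = branch a b"
    unfolding branch_def by (simp_all add: insert_commute)
  show ?thesis
    using subtree_in_side_bound[OF e half C] subtree_in_side_bound[OF e' half C'] Wab Wba half
    by (auto simp: sides)
qed

lemma third_centroid_case:
  assumes e: "{c,y} \<in> E" and half: "2 * hs_min = n" and W: "W (branch c y) = hs_min"
    and x: "centroid T w x" "x \<noteq> c" "x \<noteq> y"
  shows "\<exists>z. w z = 0 \<and> {c. central_centroid T w c} = {z} \<and> card (centroids T w) = 3 \<and>
    (\<exists>K1 K2. K1 \<noteq> K2 \<and> subtrees_of T z = {K1, K2} \<and> 2 * W K1 = n \<and> 2 * W K2 = n)"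
proof -
  have e': "{y,c} \<in> E" using e by (simp add: insert_commute)
  have W': "W (branch y c) = hs_min" using W_opposite_branches[OF e] W half by simp
  have "x \<in> branch c y \<union> branch y c" using opposite_branches_cover[OF e] x(1) centroid_iff by simp
  then show ?thesis
  proof
    assume "x \<in> branch c y"
    then have yx: "w y = 0" "{y,x} \<in> E" "W (branch y x) = hs_min"
      using third_centroid[OF e half W W' x] by simp_all
    show ?thesis using middle_centroid_case[OF e' yx(2) x(2)[symmetric] yx(1) half W' yx(3)] yx(1) by blast
  next
    assume "x \<in> branch y c"
    then have cx: "w c = 0" "{c,x} \<in> E" "W (branch c x) = hs_min"
      using third_centroid[OF e' half W' W x(1,3,2)] by simp_all
    show ?thesis using middle_centroid_case[OF e cx(2) x(3)[symmetric] cx(1) half W cx(3)] cx(1) by blast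
  qed
qed

theorem centroid_classification:
  "(\<exists>c. centroids T w = {c} \<and> 2 * hs T w c < n) \<or>
   (\<exists>e\<in>E. centroids T w = e \<and> (\<forall>x\<in>e. 2 * W (side_of_edge T e x) = n \<and>
      (\<forall>S. subtree_set T S \<and> S \<subseteq> side_of_edge T e x \<and> x \<notin> S \<longrightarrow> 2 * (W S + 1) \<le> n))) \<or>
   (\<exists>y. w y = 0 \<and> {c. central_centroid T w c} = {y} \<and> card (centroids T w) = 3 \<and>
      (\<exists>K1 K2. K1 \<noteq> K2 \<and> subtrees_of T y = {K1, K2} \<and> 2 * W K1 = n \<and> 2 * W K2 = n))"
  (is "?one \<or> ?two \<or> ?three")
proof -
  obtain c where cV: "c \<in> V" and hc: "hs T w c = hs_min" using hs_min_attained by blast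
  then have c: "centroid T w c" using centroid_iff by simp
  show ?thesis
  proof (cases "2 * hs_min < n")
    case True
    then have ?one using centroid_unique_if_light[OF c] hc by auto
    then show ?thesis by blast
  next
    case False
    then obtain y where half: "2 * hs_min = n" and y: "{c,y} \<in> E" "W (branch c y) = hs_min"
      using heavy_centroid_edge[OF c] by auto
    have y': "{y,c} \<in> E" using y(1) by (simp add: insert_commute)
    have Wyc: "W (branch y c) = hs_min" using W_opposite_branches[OF y(1)] y(2) half by simp
    show ?thesis
    proof (cases "centroids T w = {c,y}")
      case True
      then have ?two using two_centroids_balanced[OF y(1) half y(2) True] y(1) by blast
      then show ?thesis by blast
    next
      case False
      then obtain x where "centroid T w x" "x \<noteq> c" "x \<noteq> y"
        using c centroid_if_half_branch[OF y(1) half y(2)] unfolding centroids_def by auto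
      then have ?three using third_centroid_case[OF y(1) half y(2)] by blast
      then show ?thesis by blast
    qed
  qed
qed

end

section \<open>The block tree\<close>

context conn_graph
begin

abbreviation BT where "BT \<equiv> block_tree G"
abbreviation bw where "bw \<equiv> bt_weight G"

lemma verts_block_tree: "verts BT = Inl ` {v. cut_vertex G v} \<union> Inr ` {B. is_block G B}"
  unfolding block_tree_def by simp

lemma edges_block_tree: "edges BT = {{Inl v, Inr B} | v B. cut_vertex G v \<and> is_block G B \<and> v \<in> verts B}"
  unfolding block_tree_def by simp

lemma cut_vertex_in_verts: "cut_vertex G v \<Longrightarrow> v \<in> verts G" unfolding cut_vertex_def by simp

lemma block_tree_edgeE:
  assumes "{x,y} \<in> edges BT"
  obtains v B where "cut_vertex G v" "is_block G B" "v \<in> verts B"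
    "(x = Inl v \<and> y = Inr B) \<or> (x = Inr B \<and> y = Inl v)"
proof -
  obtain v B where vB: "{x,y} = {Inl v, Inr B}" "cut_vertex G v" "is_block G B" "v \<in> verts B"
    using assms unfolding edges_block_tree by blast
  then have "(x = Inl v \<and> y = Inr B) \<or> (x = Inr B \<and> y = Inl v)" by (auto simp: doubleton_eq_iff)
  then show ?thesis using that vB by blast
qed

lemma block_tree_edgeI: "cut_vertex G v \<Longrightarrow> is_block G B \<Longrightarrow> v \<in> verts B \<Longrightarrow> {Inl v, Inr B} \<in> edges BT"
  unfolding edges_block_tree by blast

lemma block_tree_edgeI': "cut_vertex G v \<Longrightarrow> is_block G B \<Longrightarrow> v \<in> verts B \<Longrightarrow> {Inr B, Inl v} \<in> edges BT"
  using block_tree_edgeI by (simp add: insert_commute)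

lemma block_tree_InlI: "cut_vertex G v \<Longrightarrow> Inl v \<in> verts BT" unfolding verts_block_tree by blast
lemma block_tree_InrI: "is_block G B \<Longrightarrow> Inr B \<in> verts BT" unfolding verts_block_tree by blast

lemma finite_blocks: "finite {B. is_block G B}"
proof -
  have "{B. is_block G B} \<subseteq> Pow (verts G) \<times> Pow (edges G)"
  proof
    fix B assume "B \<in> {B. is_block G B}"
    then have "subgraph B G" using is_blockD by blast
    then show "B \<in> Pow (verts G) \<times> Pow (edges G)"
      unfolding subgraph_def verts_def edges_def by (cases B) auto
  qed
  moreover have "finite (Pow (verts G) \<times> Pow (edges G))" using finite_verts finite_edges by simp
  ultimately show ?thesis by (rule finite_subset)
qed

lemma finite_cut_vertices: "finite {v. cut_vertex G v}"
proof -
  have "{v. cut_vertex G v} \<subseteq> verts G" using cut_vertex_in_verts by blast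
  then show ?thesis by (rule finite_subset[OF _ finite_verts])
qed

lemma finite_block_tree: "finite (verts BT)" unfolding verts_block_tree using finite_blocks finite_cut_vertices by simp

lemma block_tree_reachable_if_common_vertex:
  assumes "is_block G B" "is_block G B'" "u \<in> verts B" "u \<in> verts B'"
  shows "reachable BT (Inr B) (Inr B')"
proof (cases "B = B'")
  case True then show ?thesis using block_tree_InrI[OF assms(1)] by (simp add: reachable_refl)
next
  case False
  have cu: "cut_vertex G u" using cut_vertex_if_in_two_blocks[OF assms(1,2) False assms(3,4)] .
  have "reachable BT (Inr B) (Inl u)"
    by (rule reachable_edge[OF block_tree_edgeI'[OF cu assms(1,3)] block_tree_InrI[OF assms(1)] block_tree_InlI[OF cu]])
  moreover have "reachable BT (Inl u) (Inr B')"
    by (rule reachable_edge[OF block_tree_edgeI[OF cu assms(2,4)] block_tree_InlI[OF cu] block_tree_InrI[OF assms(2)]])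
  ultimately show ?thesis by (rule reachable_trans)
qed

lemma block_tree_reachable_if_reachable:
  assumes B1: "is_block G B1" and a: "a \<in> verts B1" and r: "reachable G a u"
  shows "\<forall>B. is_block G B \<and> u \<in> verts B \<longrightarrow> reachable BT (Inr B1) (Inr B)"
  using r
proof (induction rule: reachable_induct)
  case base
  show ?case
  proof (intro allI impI)
    fix B assume "is_block G B \<and> a \<in> verts B"
    then show "reachable BT (Inr B1) (Inr B)" using block_tree_reachable_if_common_vertex[OF B1, of B a] a by simp
  qed
next
  case (step p q)
  obtain Be where Be: "is_block G Be" "p \<in> verts Be" "q \<in> verts Be" using edge_in_block[OF step.hyps(2)] by blast
  have r1: "reachable BT (Inr B1) (Inr Be)" using step.IH Be by blast
  show ?case
  proof (intro allI impI)
    fix B assume "is_block G B \<and> q \<in> verts B"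
    then have "reachable BT (Inr Be) (Inr B)" using block_tree_reachable_if_common_vertex[OF Be(1), of B q] Be(3) by simp
    with r1 show "reachable BT (Inr B1) (Inr B)" by (rule reachable_trans)
  qed
qed

lemma block_nonempty: "is_block G B \<Longrightarrow> \<exists>u. u \<in> verts B"
  using is_blockD unfolding connected_graph_def by blast

lemma block_verts_subset: "is_block G B \<Longrightarrow> verts B \<subseteq> verts G"
  using is_blockD unfolding subgraph_def by blast

lemma reachable_some_block: "t \<in> verts BT \<Longrightarrow> \<exists>B. is_block G B \<and> reachable BT t (Inr B)"
proof -
  assume t: "t \<in> verts BT"
  then consider (l) v where "t = Inl v" "cut_vertex G v" | (r) B where "t = Inr B" "is_block G B"
    unfolding verts_block_tree by blast
  then show ?thesis
  proof cases
    case l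
    obtain B where B: "is_block G B" "v \<in> verts B" using vertex_in_block[OF cut_vertex_in_verts[OF l(2)]] by blast
    have "reachable BT (Inl v) (Inr B)"
      by (rule reachable_edge[OF block_tree_edgeI[OF l(2) B] block_tree_InlI[OF l(2)] block_tree_InrI[OF B(1)]])
    then show ?thesis using l B by blast
  next
    case r then show ?thesis using t by (intro exI[of _ B]) (simp add: reachable_refl)
  qed
qed

lemma block_tree_connected: "x \<in> verts BT \<Longrightarrow> y \<in> verts BT \<Longrightarrow> reachable BT x y"
proof -
  assume x: "x \<in> verts BT" and y: "y \<in> verts BT"
  obtain B1 where B1: "is_block G B1" "reachable BT x (Inr B1)" using reachable_some_block[OF x] by blast
  obtain B2 where B2: "is_block G B2" "reachable BT y (Inr B2)" using reachable_some_block[OF y] by blast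
  obtain a where a: "a \<in> verts B1" using block_nonempty[OF B1(1)] by blast
  obtain b where b: "b \<in> verts B2" using block_nonempty[OF B2(1)] by blast
  have "reachable G a b" using conn a b block_verts_subset[OF B1(1)] block_verts_subset[OF B2(1)]
    unfolding connected_graph_def by blast
  then have "reachable BT (Inr B1) (Inr B2)" using block_tree_reachable_if_reachable[OF B1(1) a] B2(1) b by blast
  then have "reachable BT x (Inr B2)" using B1(2) by (rule reachable_trans[rotated])
  then show ?thesis using reachable_sym[OF B2(2)] by (rule reachable_trans)
qed

definition reach_avoiding :: "'a \<Rightarrow> 'a sgraph \<Rightarrow> 'a set" where
  "reach_avoiding v B = {u. \<exists>a\<in>verts B - {v}. reachable (delete_vertex G v) a u}"

definition bt_meeting :: "'a set \<Rightarrow> ('a + 'a sgraph) set" where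
  "bt_meeting D = Inl ` D \<union> Inr ` {B'. is_block G B' \<and> verts B' \<inter> D \<noteq> {}}"

lemma notin_reach_avoiding: "v \<notin> reach_avoiding v B"
  unfolding reach_avoiding_def using reachable_in[of "delete_vertex G v" _ v] by auto

lemma reach_avoiding_closed:
  "u \<in> reach_avoiding v B \<Longrightarrow> reachable (delete_vertex G v) u u' \<Longrightarrow> u' \<in> reach_avoiding v B"
  unfolding reach_avoiding_def by (blast intro: reachable_trans)

lemma block_tree_edge_keeps_meeting:
  assumes B: "is_block G B" "v \<in> verts B"
    and e: "{t,t'} \<in> edges BT" "{t,t'} \<noteq> {Inl v, Inr B}"
    and t: "t \<in> bt_meeting (reach_avoiding v B)"
  shows "t' \<in> bt_meeting (reach_avoiding v B)"
proof -
  obtain u B' where uB: "cut_vertex G u" "is_block G B'" "u \<in> verts B'"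
    "(t = Inl u \<and> t' = Inr B') \<or> (t = Inr B' \<and> t' = Inl u)" using block_tree_edgeE[OF e(1)] by blast
  from uB(4) show ?thesis
  proof
    assume "t = Inl u \<and> t' = Inr B'"
    then show ?thesis using t uB(2,3) unfolding bt_meeting_def by auto
  next
    assume tt: "t = Inr B' \<and> t' = Inl u"
    then obtain u0 where u0: "u0 \<in> verts B'" "u0 \<in> reach_avoiding v B"
      using t unfolding bt_meeting_def by auto
    have u0v: "u0 \<noteq> v" using u0(2) notin_reach_avoiding by blast
    show ?thesis
    proof (cases "u = v")
      case False
      then have "reachable (delete_vertex G v) u0 u"
        using u0(1) u0v uB(3) by (intro block_reachable_delete[OF uB(2)]) auto
      then show ?thesis using reach_avoiding_closed[OF u0(2)] tt unfolding bt_meeting_def by blast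
    next
      case True
      then have "B \<noteq> B'" using e(2) tt by auto
      moreover obtain a where "a \<in> verts B - {v}" "reachable (delete_vertex G v) a u0"
        using u0(2) unfolding reach_avoiding_def by blast
      ultimately show ?thesis
        using blocks_separated_at_common_vertex[OF B(1) uB(2) _ B(2)] u0(1) u0v uB(3) True by blast
    qed
  qed
qed

lemma card_verts_ge_2_if_cut_vertex:
  assumes "cut_vertex G v" shows "2 \<le> card (verts G)"
proof -
  obtain a where "a \<in> verts G - {v}" using assms unfolding cut_vertex_iff[OF finite_verts conn] by blast
  then have "{v, a} \<subseteq> verts G" "card {v, a} = 2" using cut_vertex_in_verts[OF assms] by auto
  then show ?thesis using card_mono[OF finite_verts] by metis
qed

text \<open>Walking in the block tree from \<open>Inr B\<close> without the edge \<open>{Inl v, Inr B}\<close> only visits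
  vertices that meet the part of \<open>G - v\<close> reachable from \<open>B - v\<close>; by the separation of blocks at a
  common vertex this part is closed under all other edges, and it does not contain \<open>v\<close>.\<close>

lemma block_tree_no_detour:
  assumes cv: "cut_vertex G v" and B: "is_block G B" "v \<in> verts B"
  shows "\<not> reachable (verts BT, edges BT - {{Inl v, Inr B}}) (Inr B) (Inl v)"
proof
  assume r: "reachable (verts BT, edges BT - {{Inl v, Inr B}}) (Inr B) (Inl v)"
  obtain a where a: "a \<in> verts B" "a \<noteq> v"
    using block_other_vertex[OF B(1) card_verts_ge_2_if_cut_vertex[OF cv]] by blast
  then have "a \<in> verts (delete_vertex G v)" using block_verts_subset[OF B(1)] by auto
  then have "a \<in> reach_avoiding v B" using a unfolding reach_avoiding_def by (blast intro: reachable_refl)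
  then have "Inr B \<in> bt_meeting (reach_avoiding v B)" using B a unfolding bt_meeting_def by blast
  with r have "Inl v \<in> bt_meeting (reach_avoiding v B)"
    by (induction rule: reachable_induct) (use block_tree_edge_keeps_meeting[OF B] in auto)
  then show False using notin_reach_avoiding unfolding bt_meeting_def by blast
qed

lemma block_tree_bridge:
  assumes "{x,y} \<in> edges BT"
  shows "\<not> reachable (verts BT, edges BT - {{x,y}}) y x"
proof -
  obtain v B where vB: "cut_vertex G v" "is_block G B" "v \<in> verts B"
    "(x = Inl v \<and> y = Inr B) \<or> (x = Inr B \<and> y = Inl v)" using block_tree_edgeE[OF assms] by blast
  then show ?thesis
    using block_tree_no_detour[OF vB(1-3)] by (auto simp: insert_commute dest: reachable_sym)
qed

lemma noncut_vertices_of_blocks: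
  "(\<Union>B\<in>{B. is_block G B}. {u \<in> verts B. \<not> cut_vertex G u}) = verts G - {v. cut_vertex G v}"
  using block_verts_subset vertex_in_block by blast

lemma noncut_vertices_of_blocks_disjoint:
  "is_block G B \<Longrightarrow> is_block G B' \<Longrightarrow> B \<noteq> B'
    \<Longrightarrow> {u \<in> verts B. \<not> cut_vertex G u} \<inter> {u \<in> verts B'. \<not> cut_vertex G u} = {}"
  using cut_vertex_if_in_two_blocks by blast

lemma block_tree_total_weight: "set_weight bw (verts BT) = card (verts G)"
proof -
  let ?Cut = "{v. cut_vertex G v}" and ?Blk = "{B. is_block G B}"
  have "set_weight bw (verts BT) = sum bw (Inl ` ?Cut) + sum bw (Inr ` ?Blk)"
    unfolding set_weight_def verts_block_tree using finite_blocks finite_cut_vertices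
    by (intro sum.union_disjoint) auto
  also have "sum bw (Inl ` ?Cut) = card ?Cut"
    by (subst sum.reindex) (auto simp: inj_on_def bt_weight_def)
  also have "sum bw (Inr ` ?Blk) = (\<Sum>B\<in>?Blk. card {u \<in> verts B. \<not> cut_vertex G u})"
    by (subst sum.reindex) (auto simp: inj_on_def bt_weight_def)
  also have "\<dots> = card (verts G - ?Cut)"
    unfolding noncut_vertices_of_blocks[symmetric]
  proof (rule card_UN_disjoint[symmetric, OF finite_blocks])
    show "\<forall>B\<in>?Blk. finite {u \<in> verts B. \<not> cut_vertex G u}"
    proof
      fix B assume "B \<in> ?Blk"
      then show "finite {u \<in> verts B. \<not> cut_vertex G u}"
        using block_verts_subset[of B] by (intro finite_subset[OF _ finite_verts]) auto
    qed
    show "\<forall>B\<in>?Blk. \<forall>B'\<in>?Blk. B \<noteq> B' \<longrightarrow>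
        {u \<in> verts B. \<not> cut_vertex G u} \<inter> {u \<in> verts B'. \<not> cut_vertex G u} = {}"
      using noncut_vertices_of_blocks_disjoint by blast
  qed
  also have "card ?Cut + card (verts G - ?Cut) = card (verts G)"
  proof -
    have sub: "?Cut \<subseteq> verts G" using cut_vertex_in_verts by blast
    show ?thesis
      by (simp add: card_Diff_subset[OF finite_cut_vertices sub] card_mono[OF finite_verts sub])
  qed
  finally show ?thesis .
qed

lemma block_tree_weighted_tree: "weighted_tree BT bw (card (verts G))"
proof
  show "finite (verts BT)" by (rule finite_block_tree)
  show "verts BT \<noteq> {}"
  proof -
    obtain u where "u \<in> verts G" using conn unfolding connected_graph_def by blast
    then obtain B where "is_block G B" using vertex_in_block by blast
    then show ?thesis using block_tree_InrI by blast
  qed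
  show "\<exists>x y. x \<noteq> y \<and> e = {x, y} \<and> x \<in> verts BT \<and> y \<in> verts BT" if he: "e \<in> edges BT" for e
  proof -
    obtain v B where "e = {Inl v, Inr B}" "cut_vertex G v" "is_block G B"
      using he unfolding edges_block_tree by blast
    then show ?thesis using block_tree_InlI block_tree_InrI by blast
  qed
  show "reachable BT x y" if "x \<in> verts BT" "y \<in> verts BT" for x y using block_tree_connected that by blast
  show "\<not> reachable (verts BT, edges BT - {{x, y}}) y x" if "{x, y} \<in> edges BT" for x y
    using block_tree_bridge that by blast
  show "set_weight bw (verts BT) = card (verts G)" by (rule block_tree_total_weight)
  show "0 < card (verts G)" using finite_verts conn unfolding connected_graph_def by (simp add: card_gt_0_iff)
  show "0 < bw x \<or> 0 < bw y" if hxy: "{x, y} \<in> edges BT" for x y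
  proof -
    obtain v B where "(x = Inl v \<and> y = Inr B) \<or> (x = Inr B \<and> y = Inl v)"
      using block_tree_edgeE[OF hxy] by blast
    then show ?thesis by (auto simp: bt_weight_def)
  qed
qed

sublocale bt: weighted_tree BT bw "card (verts G)"
  by (rule block_tree_weighted_tree)

lemma zero_weight_block_tree_vertex:
  assumes "x \<in> verts BT" "bw x = 0"
  obtains B where "x = Inr B" "is_block G B"
  using assms unfolding verts_block_tree by (auto simp: bt_weight_def)

text \<open>All vertices of a weight-zero block are cut vertices, hence neighbours of the block in
  the block tree, and their branches are pairwise distinct.\<close>

lemma card_zero_weight_block_le:
  assumes B: "is_block G B" and w0: "bw (Inr B) = 0"
  shows "card (verts B) \<le> card (subtrees_of BT (Inr B))"
proof -
  have finB: "finite (verts B)" using block_verts_subset[OF B] finite_verts by (rule finite_subset)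
  then have "cut_vertex G u" if "u \<in> verts B" for u
    using w0 that by (simp add: bt_weight_def)
  then have eu: "{Inr B, Inl u} \<in> edges BT" if "u \<in> verts B" for u
    using block_tree_edgeI'[OF _ B] that by blast
  define f where "f u = bt.branch (Inr B) (Inl u)" for u
  have "inj_on f (verts B)"
  proof
    fix u u' assume u: "u \<in> verts B" "u' \<in> verts B" "f u = f u'"
    show "u = u'"
    proof (rule ccontr)
      assume "u \<noteq> u'"
      then have "f u \<inter> f u' = {}"
        using bt.branches_disjoint[OF eu[OF u(1)] eu[OF u(2)]] unfolding f_def by simp
      then show False using bt.root_in_branch[OF eu[OF u(1)]] u(3) unfolding f_def by simp
    qed
  qed
  moreover have "f ` verts B \<subseteq> subtrees_of BT (Inr B)"
    using bt.branch_subtree[OF eu] unfolding f_def by auto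
  ultimately show ?thesis using bt.finite_subtrees by (intro card_inj_on_le)
qed

lemma zero_weight_block_is_K2:
  assumes B: "is_block G B" and w0: "bw (Inr B) = 0"
    and K: "subtrees_of BT (Inr B) = {K1, K2}"
    and n2: "2 \<le> card (verts G)"
  shows "card (verts B) = 2 \<and> edges B = {verts B}"
proof -
  have finB: "finite (verts B)" using block_verts_subset[OF B] finite_verts by (rule finite_subset)
  have le2: "card (verts B) \<le> 2"
    using card_zero_weight_block_le[OF B w0] K by (simp add: card_insert_if split: if_splits)
  obtain u1 where u1: "u1 \<in> verts B" using block_nonempty[OF B] by blast
  obtain u2 where u2: "u2 \<in> verts B" "u2 \<noteq> u1" using block_other_vertex[OF B n2] by blast
  have sub: "{u1,u2} \<subseteq> verts B" using u1 u2 by auto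
  have "card {u1,u2} = 2" using u2 by simp
  then have VB: "verts B = {u1,u2}" using card_mono[OF finB sub] card_subset_eq[OF finB sub] le2 by simp
  have esub: "e = {u1,u2}" if e: "e \<in> edges B" for e
  proof -
    have sub: "e \<subseteq> {u1,u2}" and "e \<in> edges G" using e is_blockD[OF B] VB unfolding subgraph_def by auto
    then have "card e = 2" using edge_doubleton[of e] by (auto simp: card_2_iff)
    then show ?thesis using card_subset_eq[OF _ sub] \<open>card {u1,u2} = 2\<close> by simp
  qed
  have "reachable B u1 u2" using is_blockD[OF B] VB unfolding connected_graph_def by simp
  then obtain z where "{u1,z} \<in> edges B" by (rule reachable_first_edge) (use u2 in auto)
  then have "{u1,u2} \<in> edges B" using esub by metis
  then have "edges B = {{u1,u2}}" using esub by blast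
  then show ?thesis using VB \<open>card {u1,u2} = 2\<close> by simp
qed

lemma block_tree_centroid_cases:
  "(\<exists>c. centroids BT bw = {c} \<and> 2 * hs BT bw c < card (verts G)) \<or>
   (\<exists>v B. cut_vertex G v \<and> is_block G B \<and> v \<in> verts B \<and> centroids BT bw = {Inl v, Inr B} \<and>
      (\<forall>x\<in>{Inl v, Inr B}. 2 * set_weight bw (side_of_edge BT {Inl v, Inr B} x) = card (verts G) \<and>
        (\<forall>S. subtree_set BT S \<and> S \<subseteq> side_of_edge BT {Inl v, Inr B} x \<and> x \<notin> S
           \<longrightarrow> 2 * (set_weight bw S + 1) \<le> card (verts G)))) \<or>
   (\<exists>B. is_block G B \<and> bw (Inr B) = 0 \<and> {c. central_centroid BT bw c} = {Inr B} \<and>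
      card (centroids BT bw) = 3 \<and>
      (\<exists>K1 K2. K1 \<noteq> K2 \<and> subtrees_of BT (Inr B) = {K1, K2} \<and>
         2 * set_weight bw K1 = card (verts G) \<and> 2 * set_weight bw K2 = card (verts G)) \<and>
      card (verts B) = 2 \<and> edges B = {verts B})"
  (is "?one \<or> ?two \<or> ?three")
  using bt.centroid_classification
proof (elim disjE exE bexE conjE)
  fix c assume "centroids BT bw = {c}" "2 * hs BT bw c < card (verts G)"
  then show ?thesis by blast
next
  fix e assume e: "e \<in> edges BT" and rest: "centroids BT bw = e" "\<forall>x\<in>e. 2 * set_weight bw (side_of_edge BT e x) = card (verts G) \<and>
        (\<forall>S. subtree_set BT S \<and> S \<subseteq> side_of_edge BT e x \<and> x \<notin> S \<longrightarrow> 2 * (set_weight bw S + 1) \<le> card (verts G))"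
  obtain v B where "cut_vertex G v" "is_block G B" "v \<in> verts B" and ve: "e = {Inl v, Inr B}"
    using e unfolding edges_block_tree by blast
  then have ?two using rest unfolding ve by blast
  then show ?thesis by blast
next
  fix y K1 K2 assume y: "bw y = 0" "{c. central_centroid BT bw c} = {y}" "card (centroids BT bw) = 3"
    and K: "K1 \<noteq> K2" "subtrees_of BT y = {K1, K2}"
      "2 * set_weight bw K1 = card (verts G)" "2 * set_weight bw K2 = card (verts G)"
  have "central_centroid BT bw y" using y(2) by blast
  then have "y \<in> verts BT" unfolding central_centroid_def centroid_def by blast
  then obtain B where yB: "y = Inr B" and B: "is_block G B"
    using zero_weight_block_tree_vertex y(1) by blast
  have "0 < card (verts G)" by (rule bt.total_pos)
  then have "2 \<le> card (verts G)" using K(3) by presburger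
  then have "card (verts B) = 2 \<and> edges B = {verts B}"
    using zero_weight_block_is_K2[OF B] y(1) K(2) yB by simp
  then have ?three using B y K unfolding yB by blast
  then show ?thesis by blast
qed

end

lemma of_nat_eq_half_iff: "real k = real n / 2 \<longleftrightarrow> 2 * k = n"
  by linarith

lemma of_nat_less_half_iff: "real k < real n / 2 \<longleftrightarrow> 2 * k < n"
  by linarith

lemma of_nat_le_half_minus_one_iff: "real k \<le> real n / 2 - 1 \<longleftrightarrow> 2 * (k + 1) \<le> n"
proof -
  have "2 * (k + 1) \<le> n \<longleftrightarrow> real (2 * (k + 1)) \<le> real n" by (simp only: of_nat_le_iff)
  then show ?thesis by (simp add: field_simps)
qed

theorem corollary5p1:
  fixes G :: "'a sgraph" and n :: nat
  assumes wf: "wf_graph G"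
    and conn: "connected_graph G"
    and n_def: "n = card (verts G)"
  defines "T \<equiv> block_tree G" and "w \<equiv> bt_weight G"
  defines "P1 \<equiv> (\<exists>c. centroids T w = {c} \<and> real (hs T w c) < real n / 2)"
    and "P2 \<equiv> (\<exists>v B. cut_vertex G v \<and> is_block G B \<and> v \<in> verts B \<and>
              centroids T w = {Inl v, Inr B} \<and>
              real (set_weight w (side_of_edge T {Inl v, Inr B} (Inl v))) = real n / 2 \<and>
              real (set_weight w (side_of_edge T {Inl v, Inr B} (Inr B))) = real n / 2 \<and>
              (\<forall>S. subtree_set T S \<and> S \<subseteq> side_of_edge T {Inl v, Inr B} (Inl v) \<and> Inl v \<notin> S
                   \<longrightarrow> real (set_weight w S) \<le> real n / 2 - 1) \<and>
              (\<forall>S. subtree_set T S \<and> S \<subseteq> side_of_edge T {Inl v, Inr B} (Inr B) \<and> Inr B \<notin> S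
                   \<longrightarrow> real (set_weight w S) \<le> real n / 2 - 1))"
    and "P3 \<equiv> (\<exists>B. is_block G B \<and> w (Inr B) = 0 \<and>
              {c. central_centroid T w c} = {Inr B} \<and>
              card (centroids T w) = 3 \<and>
              (\<exists>T1 T2. T1 \<noteq> T2 \<and> subtrees_of T (Inr B) = {T1, T2} \<and>
                  real (set_weight w T1) = real n / 2 \<and> real (set_weight w T2) = real n / 2) \<and>
              card (verts B) = 2 \<and> edges B = {verts B})"
  shows "(P1 \<and> \<not> P2 \<and> \<not> P3) \<or> (\<not> P1 \<and> P2 \<and> \<not> P3) \<or> (\<not> P1 \<and> \<not> P2 \<and> P3)"
proof -
  interpret conn_graph G using wf conn by unfold_locales
  have "P1 \<or> P2 \<or> P3"
    using block_tree_centroid_cases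
    unfolding P1_def P2_def P3_def T_def w_def n_def
      of_nat_less_half_iff of_nat_eq_half_iff of_nat_le_half_minus_one_iff
    by simp blast
  moreover have "card (centroids T w) = 1" if P1 using that unfolding P1_def by auto
  moreover have "card (centroids T w) = 2" if P2 using that unfolding P2_def by auto
  moreover have "card (centroids T w) = 3" if P3 using that unfolding P3_def by auto
  ultimately show ?thesis by auto
qed

end
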